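(* Cograph recognition is in $\mathrm{LOGSPACE}$: there is a logarithmic-space deterministic Turing machine that decides, given a graph $G$, whether $G$ is a cograph.
   Context: Graphs are finite, simple, undirected, with nonempty vertex set. The join of two graphs $G$ and $H$ is obtained from their disjoint union by adding all edges $\{v,w\}$ with $v$ a vertex of $G$ and $w$ a vertex of $H$. A graph is a cograph if it can be constructed from single-vertex graphs by repeated disjoint union and join operations (i.e., it is isomorphic to such a graph). *)

theory Defs
  imports Complex_Main
begin

text \<open>A graph is given by a finite nonempty vertex set V (of naturals) and an adjacency
predicate E; only E restricted to V matters. Graphs built from single vertices by
disjoint union and join:\<close>

inductive built_cograph :: "nat set \<Rightarrow> (nat \<Rightarrow> nat \<Rightarrow> bool) \<Rightarrow> bool" where
  single: "built_cograph {v} (\<lambda>_ _. False)"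
| union: "\<lbrakk>built_cograph V1 E1; built_cograph V2 E2; V1 \<inter> V2 = {}\<rbrakk>
          \<Longrightarrow> built_cograph (V1 \<union> V2) (\<lambda>x y. E1 x y \<or> E2 x y)"
| join: "\<lbrakk>built_cograph V1 E1; built_cograph V2 E2; V1 \<inter> V2 = {}\<rbrakk>
          \<Longrightarrow> built_cograph (V1 \<union> V2)
                (\<lambda>x y. E1 x y \<or> E2 x y \<or> (x \<in> V1 \<and> y \<in> V2) \<or> (x \<in> V2 \<and> y \<in> V1))"

definition is_cograph :: "nat set \<Rightarrow> (nat \<Rightarrow> nat \<Rightarrow> bool) \<Rightarrow> bool" where
  "is_cograph V E \<longleftrightarrow> (\<exists>V' E' f. built_cograph V' E' \<and> bij_betw f V V' \<and>
      (\<forall>x\<in>V. \<forall>y\<in>V. E x y \<longleftrightarrow> E' (f x) (f y)))"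

definition encodes_graph :: "bool list \<Rightarrow> nat \<Rightarrow> bool" where
  "encodes_graph w n \<longleftrightarrow> n \<ge> 1 \<and> length w = n * n \<and>
     (\<forall>i<n. \<not> w ! (i * n + i)) \<and>
     (\<forall>i<n. \<forall>j<n. w ! (i * n + j) = w ! (j * n + i))"

definition cograph_lang :: "bool list set" where
  "cograph_lang = {w. \<exists>n. encodes_graph w n \<and> is_cograph {0..<n} (\<lambda>i j. w ! (i * n + j))}"

section \<open>Deterministic Turing machines with read-only input tape and one work tape\<close>

text \<open>States are 0..<nstates, work symbols 0..<nsyms (0 = blank). The input head reads
positions 0..length w + 1, where positions 0 and length w + 1 hold end markers (symbol 0),
and position i (1 \<le> i \<le> length w) holds 1 (for False) or 2 (for True).
The transition maps (state, input symbol, work symbol) to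
(new state, written work symbol, input head move, work head move), moves in {-1,0,1}.\<close>

record tm =
  nstates :: nat
  nsyms :: nat
  start :: nat
  acc :: nat
  rej :: nat
  delta :: "nat \<Rightarrow> nat \<Rightarrow> nat \<Rightarrow> nat \<times> nat \<times> int \<times> int"

definition wf_tm :: "tm \<Rightarrow> bool" where
  "wf_tm M \<longleftrightarrow> nsyms M \<ge> 1 \<and> start M < nstates M \<and> acc M < nstates M \<and>
     rej M < nstates M \<and> acc M \<noteq> rej M \<and>
     (\<forall>q<nstates M. \<forall>a\<le>2. \<forall>s<nsyms M.
        (case delta M q a s of (q', s', di, dw) \<Rightarrow>
           q' < nstates M \<and> s' < nsyms M \<and> di \<in> {-1,0,1} \<and> dw \<in> {-1,0,1}))"

definition inp_sym :: "bool list \<Rightarrow> nat \<Rightarrow> nat" where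
  "inp_sym w i = (if i = 0 \<or> i > length w then 0 else if w ! (i - 1) then 2 else 1)"

text \<open>Configuration: (state, input head position, work head position, work tape contents).\<close>
type_synonym conf = "nat \<times> nat \<times> nat \<times> (nat \<Rightarrow> nat)"

definition init_conf :: "tm \<Rightarrow> conf" where
  "init_conf M = (start M, 0, 0, \<lambda>_. 0)"

definition step :: "tm \<Rightarrow> bool list \<Rightarrow> conf \<Rightarrow> conf" where
  "step M w c = (case c of (q, ih, wh, tp) \<Rightarrow>
     if q = acc M \<or> q = rej M then c else
     (case delta M q (inp_sym w ih) (tp wh) of (q', s', di, dw) \<Rightarrow>
        (q', nat (min (int (length w) + 1) (max 0 (int ih + di))),
             nat (max 0 (int wh + dw)), tp(wh := s'))))"

definition run :: "tm \<Rightarrow> bool list \<Rightarrow> nat \<Rightarrow> conf" where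
  "run M w t = (step M w ^^ t) (init_conf M)"

definition state_of :: "conf \<Rightarrow> nat" where "state_of c = fst c"
definition work_head :: "conf \<Rightarrow> nat" where "work_head c = fst (snd (snd c))"

definition logspace_tm :: "tm \<Rightarrow> bool" where
  "logspace_tm M \<longleftrightarrow> (\<exists>c::real. \<forall>w. \<exists>t.
     (state_of (run M w t) = acc M \<or> state_of (run M w t) = rej M) \<and>
     (\<forall>t'\<le>t. real (work_head (run M w t')) \<le> c * log 2 (real (length w) + 2) + c))"

definition accepts :: "tm \<Rightarrow> bool list \<Rightarrow> bool" where
  "accepts M w \<longleftrightarrow> (\<exists>t. state_of (run M w t) = acc M)"

definition decides :: "tm \<Rightarrow> bool list set \<Rightarrow> bool" where
  "decides M L \<longleftrightarrow> (\<forall>w. accepts M w \<longleftrightarrow> w \<in> L)"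

end

(* A graph is a cograph iff it has no induced path on four vertices (P4). Cographs are P4-free by
   induction on their construction; conversely, a P4-free graph on at least two vertices is
   disconnected or has a disconnected complement, so it splits as a disjoint union or a join of
   smaller P4-free graphs. For a graph given by its adjacency matrix, P4-freeness is decided by a
   counter machine that runs four nested loops over the vertices, all of whose counters stay
   below the input length. A Turing machine simulates such a machine by keeping the counters in
   binary on its work tape, which therefore needs only logarithmically many cells. *)

theory Submission
  imports Defs
begin

section \<open>Cographs are the P4-free graphs\<close>

definition has_induced_P4 :: "'a set \<Rightarrow> ('a \<Rightarrow> 'a \<Rightarrow> bool) \<Rightarrow> bool" where
  "has_induced_P4 V E \<longleftrightarrow> (\<exists>a\<in>V. \<exists>b\<in>V. \<exists>c\<in>V. \<exists>d\<in>V.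
     E a b \<and> E b c \<and> E c d \<and> \<not> E a c \<and> \<not> E b d \<and> \<not> E a d)"

definition simple_graph_on :: "'a set \<Rightarrow> ('a \<Rightarrow> 'a \<Rightarrow> bool) \<Rightarrow> bool" where
  "simple_graph_on V E \<longleftrightarrow> (\<forall>x\<in>V. \<forall>y\<in>V. E x y \<longleftrightarrow> E y x) \<and> (\<forall>x\<in>V. \<not> E x x)"

definition disconnected_on :: "'a set \<Rightarrow> ('a \<Rightarrow> 'a \<Rightarrow> bool) \<Rightarrow> bool" where
  "disconnected_on V E \<longleftrightarrow> (\<exists>A B. A \<union> B = V \<and> A \<inter> B = {} \<and> A \<noteq> {} \<and> B \<noteq> {} \<and>
     (\<forall>a\<in>A. \<forall>b\<in>B. \<not> E a b))"

definition complement_graph :: "('a \<Rightarrow> 'a \<Rightarrow> bool) \<Rightarrow> 'a \<Rightarrow> 'a \<Rightarrow> bool" where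
  "complement_graph E x y \<longleftrightarrow> x \<noteq> y \<and> \<not> E x y"

definition map_graph :: "('a \<Rightarrow> 'b) \<Rightarrow> ('a \<Rightarrow> 'a \<Rightarrow> bool) \<Rightarrow> 'b \<Rightarrow> 'b \<Rightarrow> bool" where
  "map_graph g E x y \<longleftrightarrow> (\<exists>a b. x = g a \<and> y = g b \<and> E a b)"

lemma disconnected_onI:
  assumes "A \<union> B = V" "A \<inter> B = {}" "A \<noteq> {}" "B \<noteq> {}" "\<And>a b. a \<in> A \<Longrightarrow> b \<in> B \<Longrightarrow> \<not> E a b"
  shows "disconnected_on V E"
  using assms unfolding disconnected_on_def by blast

lemma simple_graph_on_sym: "simple_graph_on V E \<Longrightarrow> x \<in> V \<Longrightarrow> y \<in> V \<Longrightarrow> E x y \<longleftrightarrow> E y x"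
  unfolding simple_graph_on_def by blast

lemma simple_graph_on_subset: "simple_graph_on V E \<Longrightarrow> W \<subseteq> V \<Longrightarrow> simple_graph_on W E"
  unfolding simple_graph_on_def by blast

lemma P4_free_subset: "\<not> has_induced_P4 V E \<Longrightarrow> W \<subseteq> V \<Longrightarrow> \<not> has_induced_P4 W E"
  unfolding has_induced_P4_def by blast

lemma simple_graph_on_complement: "simple_graph_on V E \<Longrightarrow> simple_graph_on V (complement_graph E)"
  unfolding simple_graph_on_def complement_graph_def by blast

lemma built_cograph_edges_within: "built_cograph V E \<Longrightarrow> E x y \<Longrightarrow> x \<in> V \<and> y \<in> V"
  by (induction rule: built_cograph.induct) auto

lemma built_cograph_P4_free: "built_cograph V E \<Longrightarrow> \<not> has_induced_P4 V E"
proof (induction rule: built_cograph.induct)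
  case (single v)
  then show ?case by (simp add: has_induced_P4_def)
next
  case (union V1 E1 V2 E2)
  have within: "E1 x y \<Longrightarrow> x \<in> V1 \<and> y \<in> V1" "E2 x y \<Longrightarrow> x \<in> V2 \<and> y \<in> V2" for x y
    using built_cograph_edges_within union.hyps(1,2) by blast+
  show ?case
  proof
    assume "has_induced_P4 (V1 \<union> V2) (\<lambda>x y. E1 x y \<or> E2 x y)"
    then obtain a b c d where edges: "E1 a b \<or> E2 a b" "E1 b c \<or> E2 b c" "E1 c d \<or> E2 c d"
      and non_edges: "\<not> (E1 a c \<or> E2 a c)" "\<not> (E1 b d \<or> E2 b d)" "\<not> (E1 a d \<or> E2 a d)"
      unfolding has_induced_P4_def by blast
    \<comment> \<open>the path a-b-c-d is connected, so it stays inside one side\<close>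
    consider "E1 a b" "E1 b c" "E1 c d" | "E2 a b" "E2 b c" "E2 c d"
      using edges within union.hyps(3) by blast
    then show False
      using union.IH non_edges within unfolding has_induced_P4_def by cases blast+
  qed
next
  case (join V1 E1 V2 E2)
  let ?E = "\<lambda>x y. E1 x y \<or> E2 x y \<or> (x \<in> V1 \<and> y \<in> V2) \<or> (x \<in> V2 \<and> y \<in> V1)"
  have within: "E1 x y \<Longrightarrow> x \<in> V1 \<and> y \<in> V1" "E2 x y \<Longrightarrow> x \<in> V2 \<and> y \<in> V2" for x y
    using built_cograph_edges_within join.hyps(1,2) by blast+
  show ?case
  proof
    assume "has_induced_P4 (V1 \<union> V2) ?E"
    then obtain a b c d where abcd: "a \<in> V1 \<union> V2" "b \<in> V1 \<union> V2" "c \<in> V1 \<union> V2" "d \<in> V1 \<union> V2"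
      and edges: "?E a b" "?E b c" "?E c d" and non_edges: "\<not> ?E a c" "\<not> ?E b d" "\<not> ?E a d"
      unfolding has_induced_P4_def by blast
    \<comment> \<open>the complementary path c-a-d-b is connected, so it stays inside one side\<close>
    consider "a \<in> V1" "b \<in> V1" "c \<in> V1" "d \<in> V1" | "a \<in> V2" "b \<in> V2" "c \<in> V2" "d \<in> V2"
      using abcd non_edges by blast
    then show False
    proof cases
      case 1
      then have "E1 a b" "E1 b c" "E1 c d" using edges within join.hyps(3) by blast+
      then show False using join.IH(1) non_edges 1 unfolding has_induced_P4_def by blast
    next
      case 2
      then have "E2 a b" "E2 b c" "E2 c d" using edges within join.hyps(3) by blast+
      then show False using join.IH(2) non_edges 2 unfolding has_induced_P4_def by blast
    qed
  qed
qed

lemma cograph_P4_free: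
  assumes "is_cograph V E"
  shows "\<not> has_induced_P4 V E"
proof
  assume "has_induced_P4 V E"
  obtain V' E' f where built: "built_cograph V' E'" and f: "bij_betw f V V'"
    and edges: "\<forall>x\<in>V. \<forall>y\<in>V. E x y \<longleftrightarrow> E' (f x) (f y)"
    using assms unfolding is_cograph_def by blast
  from \<open>has_induced_P4 V E\<close> obtain a b c d where "a \<in> V" "b \<in> V" "c \<in> V" "d \<in> V"
    "E a b" "E b c" "E c d" "\<not> E a c" "\<not> E b d" "\<not> E a d"
    unfolding has_induced_P4_def by blast
  moreover have "f a \<in> V'" "f b \<in> V'" "f c \<in> V'" "f d \<in> V'"
    using bij_betwE[OF f] \<open>a \<in> V\<close> \<open>b \<in> V\<close> \<open>c \<in> V\<close> \<open>d \<in> V\<close> by blast+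
  ultimately have "has_induced_P4 V' E'"
    using edges unfolding has_induced_P4_def
    by (intro bexI[of _ "f a"] bexI[of _ "f b"] bexI[of _ "f c"] bexI[of _ "f d"]) auto
  then show False using built_cograph_P4_free[OF built] by blast
qed

lemma is_cographI:
  assumes "built_cograph V' E'" "bij_betw f V V'" "\<And>x y. x \<in> V \<Longrightarrow> y \<in> V \<Longrightarrow> E x y \<longleftrightarrow> E' (f x) (f y)"
  shows "is_cograph V E"
  using assms unfolding is_cograph_def by blast

lemma map_graph_apply: "inj g \<Longrightarrow> map_graph g E (g a) (g b) \<longleftrightarrow> E a b"
  by (auto simp: map_graph_def inj_eq)

lemma built_cograph_map:
  assumes "built_cograph V E" "inj g"
  shows "built_cograph (g ` V) (map_graph g E)"
  using assms(1)
proof induction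
  case (single v)
  have "map_graph g (\<lambda>_ _. False) = (\<lambda>_ _. False)" by (auto simp: map_graph_def fun_eq_iff)
  then show ?case using built_cograph.single by simp
next
  case (union V1 E1 V2 E2)
  have "map_graph g (\<lambda>x y. E1 x y \<or> E2 x y) = (\<lambda>x y. map_graph g E1 x y \<or> map_graph g E2 x y)"
    by (auto simp: map_graph_def fun_eq_iff)
  moreover have "g ` V1 \<inter> g ` V2 = {}" using union.hyps(3) assms(2) by (auto simp: inj_eq)
  ultimately show ?case unfolding image_Un using built_cograph.union[OF union.IH] by simp
next
  case (join V1 E1 V2 E2)
  have "map_graph g (\<lambda>x y. E1 x y \<or> E2 x y \<or> (x \<in> V1 \<and> y \<in> V2) \<or> (x \<in> V2 \<and> y \<in> V1)) =
      (\<lambda>x y. map_graph g E1 x y \<or> map_graph g E2 x y \<or>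
        (x \<in> g ` V1 \<and> y \<in> g ` V2) \<or> (x \<in> g ` V2 \<and> y \<in> g ` V1))"
    by (auto simp: map_graph_def fun_eq_iff)
  moreover have "g ` V1 \<inter> g ` V2 = {}" using join.hyps(3) assms(2) by (auto simp: inj_eq)
  ultimately show ?case unfolding image_Un using built_cograph.join[OF join.IH] by simp
qed

lemma cograph_reembed:
  fixes g :: "nat \<Rightarrow> nat"
  assumes "is_cograph V E" "inj g"
  obtains V' E' f where "built_cograph V' E'" "bij_betw f V V'" "V' \<subseteq> range g"
    "\<forall>x\<in>V. \<forall>y\<in>V. E x y \<longleftrightarrow> E' (f x) (f y)"
proof -
  obtain V0 E0 f0 where built: "built_cograph V0 E0" and f0: "bij_betw f0 V V0"
    and edges: "\<forall>x\<in>V. \<forall>y\<in>V. E x y \<longleftrightarrow> E0 (f0 x) (f0 y)"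
    using assms(1) unfolding is_cograph_def by blast
  show thesis
  proof (rule that)
    show "built_cograph (g ` V0) (map_graph g E0)" using built_cograph_map[OF built assms(2)] .
    show "bij_betw (g \<circ> f0) V (g ` V0)"
      using f0 assms(2) by (meson bij_betw_imageI bij_betw_trans inj_on_subset subset_UNIV)
    show "\<forall>x\<in>V. \<forall>y\<in>V. E x y \<longleftrightarrow> map_graph g E0 ((g \<circ> f0) x) ((g \<circ> f0) y)"
      using edges map_graph_apply[OF assms(2)] by simp
  qed auto
qed

lemma disjoint_cograph_copies:
  assumes A: "is_cograph A E" and B: "is_cograph B E" and disjoint: "A \<inter> B = {}"
  obtains A' EA B' EB h where "built_cograph A' EA" "built_cograph B' EB" "A' \<inter> B' = {}"
    "bij_betw h (A \<union> B) (A' \<union> B')"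
    "\<And>x. x \<in> A \<union> B \<Longrightarrow> h x \<in> A' \<longleftrightarrow> x \<in> A" "\<And>x. x \<in> A \<union> B \<Longrightarrow> h x \<in> B' \<longleftrightarrow> x \<in> B"
    "\<And>x y. x \<in> A \<union> B \<Longrightarrow> y \<in> A \<union> B \<Longrightarrow> EA (h x) (h y) \<longleftrightarrow> x \<in> A \<and> y \<in> A \<and> E x y"
    "\<And>x y. x \<in> A \<union> B \<Longrightarrow> y \<in> A \<union> B \<Longrightarrow> EB (h x) (h y) \<longleftrightarrow> x \<in> B \<and> y \<in> B \<and> E x y"
proof -
  \<comment> \<open>move the two cographs onto the even and the odd numbers\<close>
  have inj: "inj (\<lambda>x::nat. 2 * x)" "inj (\<lambda>x::nat. 2 * x + 1)" by (auto intro: injI)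
  obtain A' EA fa where A': "built_cograph A' EA" "bij_betw fa A A'" "A' \<subseteq> range (\<lambda>x. 2 * x)"
    and EA: "\<forall>x\<in>A. \<forall>y\<in>A. E x y \<longleftrightarrow> EA (fa x) (fa y)"
    using cograph_reembed[OF A inj(1)] by blast
  obtain B' EB fb where B': "built_cograph B' EB" "bij_betw fb B B'" "B' \<subseteq> range (\<lambda>x. 2 * x + 1)"
    and EB: "\<forall>x\<in>B. \<forall>y\<in>B. E x y \<longleftrightarrow> EB (fb x) (fb y)"
    using cograph_reembed[OF B inj(2)] by blast
  have "2 * a \<noteq> 2 * b + 1" for a b :: nat by presburger
  then have disjoint': "A' \<inter> B' = {}" using A'(3) B'(3) by blast
  define h where "h x = (if x \<in> A then fa x else fb x)" for x
  have "bij_betw h A A'" using A'(2) by (rule bij_betw_cong[THEN iffD1, rotated]) (simp add: h_def)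
  moreover have "bij_betw h B B'"
    using B'(2) by (rule bij_betw_cong[THEN iffD1, rotated]) (use disjoint in \<open>auto simp: h_def\<close>)
  ultimately have bij: "bij_betw h (A \<union> B) (A' \<union> B')" using bij_betw_combine disjoint' by blast
  have side: "h x \<in> A' \<longleftrightarrow> x \<in> A" "h x \<in> B' \<longleftrightarrow> x \<in> B" if "x \<in> A \<union> B" for x
    using that disjoint disjoint' bij_betwE[OF A'(2)] bij_betwE[OF B'(2)] by (auto simp: h_def)
  have h_B: "h x = fb x" if "x \<in> B" for x using that disjoint by (auto simp: h_def)
  show thesis
  proof (rule that[OF A'(1) B'(1) disjoint' bij side])
    fix x y assume xy: "x \<in> A \<union> B" "y \<in> A \<union> B"
    show "EA (h x) (h y) \<longleftrightarrow> x \<in> A \<and> y \<in> A \<and> E x y"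
    proof
      assume edge: "EA (h x) (h y)"
      then have "x \<in> A" "y \<in> A" using built_cograph_edges_within[OF A'(1)] side xy by blast+
      then show "x \<in> A \<and> y \<in> A \<and> E x y" using EA edge by (simp add: h_def)
    qed (use EA in \<open>auto simp: h_def\<close>)
    show "EB (h x) (h y) \<longleftrightarrow> x \<in> B \<and> y \<in> B \<and> E x y"
    proof
      assume edge: "EB (h x) (h y)"
      then have "x \<in> B" "y \<in> B" using built_cograph_edges_within[OF B'(1)] side xy by blast+
      then show "x \<in> B \<and> y \<in> B \<and> E x y" using EB edge by (simp add: h_B)
    qed (use EB in \<open>auto simp: h_B\<close>)
  qed
qed

lemma is_cograph_union_or_join:
  assumes "is_cograph A E" "is_cograph B E" "A \<inter> B = {}"
    and cross: "(\<forall>a\<in>A. \<forall>b\<in>B. \<not> E a b \<and> \<not> E b a) \<or> (\<forall>a\<in>A. \<forall>b\<in>B. E a b \<and> E b a)"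
  shows "is_cograph (A \<union> B) E"
proof -
  obtain A' EA B' EB h where built: "built_cograph A' EA" "built_cograph B' EB" "A' \<inter> B' = {}"
    and bij: "bij_betw h (A \<union> B) (A' \<union> B')"
    and side: "\<And>x. x \<in> A \<union> B \<Longrightarrow> h x \<in> A' \<longleftrightarrow> x \<in> A" "\<And>x. x \<in> A \<union> B \<Longrightarrow> h x \<in> B' \<longleftrightarrow> x \<in> B"
    and EA: "\<And>x y. x \<in> A \<union> B \<Longrightarrow> y \<in> A \<union> B \<Longrightarrow> EA (h x) (h y) \<longleftrightarrow> x \<in> A \<and> y \<in> A \<and> E x y"
    and EB: "\<And>x y. x \<in> A \<union> B \<Longrightarrow> y \<in> A \<union> B \<Longrightarrow> EB (h x) (h y) \<longleftrightarrow> x \<in> B \<and> y \<in> B \<and> E x y"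
    using disjoint_cograph_copies[OF assms(1-3)] by blast
  from cross show ?thesis
  proof
    assume no_cross: "\<forall>a\<in>A. \<forall>b\<in>B. \<not> E a b \<and> \<not> E b a"
    show ?thesis
    proof (rule is_cographI[OF built_cograph.union[OF built] bij])
      fix x y assume xy: "x \<in> A \<union> B" "y \<in> A \<union> B"
      show "E x y \<longleftrightarrow> EA (h x) (h y) \<or> EB (h x) (h y)"
        unfolding EA[OF xy] EB[OF xy] using no_cross xy by blast
    qed
  next
    assume all_cross: "\<forall>a\<in>A. \<forall>b\<in>B. E a b \<and> E b a"
    show ?thesis
    proof (rule is_cographI[OF built_cograph.join[OF built] bij])
      fix x y assume xy: "x \<in> A \<union> B" "y \<in> A \<union> B"
      show "E x y \<longleftrightarrow> EA (h x) (h y) \<or> EB (h x) (h y) \<or>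
          (h x \<in> A' \<and> h y \<in> B') \<or> (h x \<in> B' \<and> h y \<in> A')"
        unfolding EA[OF xy] EB[OF xy] side(1)[OF xy(1)] side(1)[OF xy(2)] side(2)[OF xy(1)] side(2)[OF xy(2)]
        using all_cross xy assms(3) by blast
    qed
  qed
qed

lemma disconnected_by_non_neighbour:
  assumes simple: "simple_graph_on V E" and P4_free: "\<not> has_induced_P4 V E" and v: "v \<in> V"
    and parts: "A \<union> B = V - {v}" "A \<inter> B = {}" "B \<noteq> {}" and no_cross: "\<forall>a\<in>A. \<forall>b\<in>B. \<not> E a b"
    and u: "u \<in> A" "\<not> E v u"
  shows "disconnected_on V E"
proof -
  note sym = simple_graph_on_sym[OF simple]
  have sub: "A \<subseteq> V" "B \<subseteq> V" "v \<notin> A" "v \<notin> B" using parts by auto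
  show ?thesis
  proof (cases "\<exists>z\<in>B. E v z")
    case False
    show ?thesis
    proof (rule disconnected_onI[of B "A \<union> {v}"])
      fix b a assume b: "b \<in> B" and a: "a \<in> A \<union> {v}"
      then have "\<not> E a b" using False no_cross by blast
      moreover have "a \<in> V" "b \<in> V" using a b sub v by auto
      ultimately show "\<not> E b a" using sym by blast
    qed (use parts v in auto)
  next
    case True
    then obtain z where z: "z \<in> B" "E v z" by blast
    define X where "X = {x\<in>A. E v x}"
    define Y where "Y = A - X"
    show ?thesis
    proof (cases "\<exists>x\<in>X. \<exists>y\<in>Y. E x y")
      case True
      \<comment> \<open>then y-x-v-z is an induced P4\<close>
      then obtain x y where xy: "x \<in> X" "y \<in> Y" "E x y" by blast
      have V: "x \<in> V" "y \<in> V" "z \<in> V" using xy z sub unfolding X_def Y_def by auto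
      have "E y x" using xy(3) sym[OF V(1,2)] by blast
      moreover have "E x v" "\<not> E y v" using xy sym[OF V(1) v] sym[OF V(2) v] by (auto simp: X_def Y_def)
      moreover have "\<not> E x z" "\<not> E y z" using xy z no_cross by (auto simp: X_def Y_def)
      ultimately have "has_induced_P4 V E"
        unfolding has_induced_P4_def using V v \<open>E v z\<close> by blast
      then show ?thesis using P4_free by blast
    next
      case False
      show ?thesis
      proof (rule disconnected_onI[of Y "X \<union> B \<union> {v}"])
        fix y a assume y: "y \<in> Y" and a: "a \<in> X \<union> B \<union> {v}"
        have "y \<in> V" "a \<in> V" using y a sub v unfolding X_def Y_def by auto
        moreover have "\<not> E a y \<or> \<not> E y a" using False y a no_cross unfolding X_def Y_def by auto
        ultimately show "\<not> E y a" using sym by blast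
      qed (use parts v u in \<open>auto simp: X_def Y_def\<close>)
    qed
  qed
qed

lemma disconnected_or_codisconnected_insert:
  assumes simple: "simple_graph_on V E" and P4_free: "\<not> has_induced_P4 V E" and v: "v \<in> V"
    and "disconnected_on (V - {v}) E"
  shows "disconnected_on V E \<or> disconnected_on V (complement_graph E)"
proof -
  obtain A B where parts: "A \<union> B = V - {v}" "A \<inter> B = {}" "A \<noteq> {}" "B \<noteq> {}"
    and no_cross: "\<forall>a\<in>A. \<forall>b\<in>B. \<not> E a b"
    using \<open>disconnected_on (V - {v}) E\<close> unfolding disconnected_on_def by blast
  show ?thesis
  proof (cases "\<forall>u\<in>V - {v}. E v u")
    case True
    then have "disconnected_on V (complement_graph E)"
      using parts v by (intro disconnected_onI[of "{v}" "V - {v}"]) (auto simp: complement_graph_def)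
    then show ?thesis by blast
  next
    case False
    then obtain u where u: "u \<in> A \<union> B" "\<not> E v u" using parts by blast
    show ?thesis
    proof (cases "u \<in> A")
      case True
      then show ?thesis using disconnected_by_non_neighbour[OF simple P4_free v parts(1,2,4) no_cross] u by blast
    next
      case False
      have "\<not> E b a" if "b \<in> B" "a \<in> A" for a b
        using that no_cross simple_graph_on_sym[OF simple, of a b] parts(1) by blast
      moreover have "B \<union> A = V - {v}" "B \<inter> A = {}" using parts by auto
      ultimately show ?thesis
        using disconnected_by_non_neighbour[OF simple P4_free v _ _ parts(3)] u False by blast
    qed
  qed
qed

lemma P4_free_complement:
  assumes "simple_graph_on V E" "\<not> has_induced_P4 V E"
  shows "\<not> has_induced_P4 V (complement_graph E)"
proof
  assume "has_induced_P4 V (complement_graph E)"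
  then obtain a b c d where abcd: "a \<in> V" "b \<in> V" "c \<in> V" "d \<in> V" and
    P4: "complement_graph E a b" "complement_graph E b c" "complement_graph E c d"
      "\<not> complement_graph E a c" "\<not> complement_graph E b d" "\<not> complement_graph E a d"
    unfolding has_induced_P4_def by blast
  note sym = simple_graph_on_sym[OF assms(1)]
  have "a \<noteq> c" "a \<noteq> d" "b \<noteq> d"
    using P4 sym[OF abcd(1,3)] unfolding complement_graph_def by auto
  \<comment> \<open>the P4 is self-complementary: b-d-a-c is an induced P4 of E\<close>
  then have "E b d" "E d a" "E a c" "\<not> E b a" "\<not> E d c" "\<not> E b c"
    using P4 sym abcd unfolding complement_graph_def by auto
  then have "has_induced_P4 V E" unfolding has_induced_P4_def using abcd by blast
  then show False using assms(2) by blast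
qed

lemma disconnected_on_complement_complement:
  assumes "disconnected_on V (complement_graph (complement_graph E))"
  shows "disconnected_on V E"
proof -
  obtain A B where parts: "A \<union> B = V" "A \<inter> B = {}" "A \<noteq> {}" "B \<noteq> {}"
    and no_cross: "\<forall>a\<in>A. \<forall>b\<in>B. \<not> complement_graph (complement_graph E) a b"
    using assms unfolding disconnected_on_def by blast
  have "\<not> E a b" if "a \<in> A" "b \<in> B" for a b
  proof -
    have "a \<noteq> b" using that parts(2) by blast
    moreover have "\<not> complement_graph (complement_graph E) a b" using no_cross that by blast
    ultimately show ?thesis by (simp add: complement_graph_def)
  qed
  with parts show ?thesis by (rule disconnected_onI)
qed

lemma P4_free_disconnected_or_codisconnected:
  assumes "finite V" "card V \<ge> 2" "simple_graph_on V E" "\<not> has_induced_P4 V E"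
  shows "disconnected_on V E \<or> disconnected_on V (complement_graph E)"
  using assms
proof (induction "card V" arbitrary: V rule: less_induct)
  case less
  show ?case
  proof (cases "card V = 2")
    case True
    then obtain u v where uv: "V = {u, v}" "u \<noteq> v" by (meson card_2_iff)
    show ?thesis
    proof (cases "E u v")
      case True
      then have "disconnected_on V (complement_graph E)"
        using uv by (intro disconnected_onI[of "{u}" "{v}"]) (auto simp: complement_graph_def)
      then show ?thesis ..
    next
      case False
      then have "disconnected_on V E" using uv by (intro disconnected_onI[of "{u}" "{v}"]) auto
      then show ?thesis ..
    qed
  next
    case False
    then obtain v where v: "v \<in> V" using less.prems(2) by fastforce
    have smaller: "card (V - {v}) \<ge> 2" "card (V - {v}) < card V"
      using False v less.prems(1,2) by auto
    have "simple_graph_on (V - {v}) E" "\<not> has_induced_P4 (V - {v}) E"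
      using simple_graph_on_subset[OF less.prems(3)] P4_free_subset[OF less.prems(4)] by auto
    then have "disconnected_on (V - {v}) E \<or> disconnected_on (V - {v}) (complement_graph E)"
      using less.hyps[OF smaller(2) _ smaller(1)] less.prems(1) by blast
    then show ?thesis
    proof
      assume "disconnected_on (V - {v}) E"
      then show ?thesis using disconnected_or_codisconnected_insert[OF less.prems(3,4) v] by blast
    next
      assume "disconnected_on (V - {v}) (complement_graph E)"
      then have "disconnected_on V (complement_graph E) \<or>
          disconnected_on V (complement_graph (complement_graph E))"
        using disconnected_or_codisconnected_insert[OF simple_graph_on_complement P4_free_complement v]
          less.prems(3,4) by blast
      then show ?thesis using disconnected_on_complement_complement by blast
    qed
  qed
qed

lemma split_union_or_join:
  assumes simple: "simple_graph_on V E"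
    and "disconnected_on V E \<or> disconnected_on V (complement_graph E)"
  obtains A B where "A \<union> B = V" "A \<inter> B = {}" "A \<noteq> {}" "B \<noteq> {}"
    "(\<forall>a\<in>A. \<forall>b\<in>B. \<not> E a b \<and> \<not> E b a) \<or> (\<forall>a\<in>A. \<forall>b\<in>B. E a b \<and> E b a)"
proof -
  note sym = simple_graph_on_sym[OF simple]
  from assms(2) show thesis
  proof
    assume "disconnected_on V E"
    then obtain A B where parts: "A \<union> B = V" "A \<inter> B = {}" "A \<noteq> {}" "B \<noteq> {}"
      and no_cross: "\<forall>a\<in>A. \<forall>b\<in>B. \<not> E a b"
      unfolding disconnected_on_def by blast
    have "\<not> E a b \<and> \<not> E b a" if "a \<in> A" "b \<in> B" for a b
      using that no_cross sym[of a b] parts(1) by blast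
    then show thesis using that parts by blast
  next
    assume "disconnected_on V (complement_graph E)"
    then obtain A B where parts: "A \<union> B = V" "A \<inter> B = {}" "A \<noteq> {}" "B \<noteq> {}"
      and no_cross: "\<forall>a\<in>A. \<forall>b\<in>B. \<not> complement_graph E a b"
      unfolding disconnected_on_def by blast
    have "E a b \<and> E b a" if "a \<in> A" "b \<in> B" for a b
    proof -
      have "a \<noteq> b" using that parts(2) by blast
      moreover have "\<not> complement_graph E a b" using that no_cross by blast
      ultimately have "E a b" by (simp add: complement_graph_def)
      then show ?thesis using sym[of a b] that parts(1) by blast
    qed
    then show thesis using that parts by blast
  qed
qed

lemma P4_free_is_cograph:
  assumes "finite V" "V \<noteq> {}" "simple_graph_on V E" "\<not> has_induced_P4 V E"
  shows "is_cograph V E"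
  using assms
proof (induction "card V" arbitrary: V rule: less_induct)
  case less
  show ?case
  proof (cases "card V = 1")
    case True
    then obtain v where V: "V = {v}" using card_1_singletonE by blast
    have "\<not> E v v" using less.prems(3) V unfolding simple_graph_on_def by blast
    then show ?thesis unfolding is_cograph_def V
      by (intro exI[of _ "{v}"] exI[of _ "\<lambda>_ _. False"] exI[of _ id]) (auto intro: built_cograph.single)
  next
    case False
    moreover have "card V > 0" using less.prems(1,2) by (simp add: card_gt_0_iff)
    ultimately have "card V \<ge> 2" by linarith
    then have split: "disconnected_on V E \<or> disconnected_on V (complement_graph E)"
      using P4_free_disconnected_or_codisconnected less.prems by blast
    obtain A B where parts: "A \<union> B = V" "A \<inter> B = {}" "A \<noteq> {}" "B \<noteq> {}"
      and cross: "(\<forall>a\<in>A. \<forall>b\<in>B. \<not> E a b \<and> \<not> E b a) \<or> (\<forall>a\<in>A. \<forall>b\<in>B. E a b \<and> E b a)"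
      using split_union_or_join[OF less.prems(3) split] by blast
    have "card A < card V" "card B < card V"
      using parts less.prems(1) by (auto intro!: psubset_card_mono)
    moreover have "finite A" "finite B" "A \<subseteq> V" "B \<subseteq> V" using parts less.prems(1) by auto
    ultimately have "is_cograph A E" "is_cograph B E"
      using less.hyps parts(3,4) simple_graph_on_subset[OF less.prems(3)]
        P4_free_subset[OF less.prems(4)] by blast+
    then show ?thesis using is_cograph_union_or_join parts cross by blast
  qed
qed

theorem cograph_iff_P4_free:
  assumes "finite V" "V \<noteq> {}" "simple_graph_on V E"
  shows "is_cograph V E \<longleftrightarrow> \<not> has_induced_P4 V E"
  using P4_free_is_cograph cograph_P4_free assms by blast

definition reaches_within :: "('c \<Rightarrow> 'c) \<Rightarrow> ('c \<Rightarrow> bool) \<Rightarrow> 'c \<Rightarrow> 'c \<Rightarrow> bool" where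
  "reaches_within f S c c' \<longleftrightarrow> (\<exists>k. (f ^^ k) c = c' \<and> (\<forall>j\<le>k. S ((f ^^ j) c)))"

lemma reaches_within_refl: "S c \<Longrightarrow> reaches_within f S c c"
  unfolding reaches_within_def by (intro exI[of _ 0]) auto

lemma reaches_within_step:
  assumes "f c = c'" "S c" "reaches_within f S c' c''"
  shows "reaches_within f S c c''"
proof -
  obtain k where k: "(f ^^ k) c' = c''" "\<forall>j\<le>k. S ((f ^^ j) c')"
    using assms(3) unfolding reaches_within_def by blast
  have shift: "(f ^^ Suc j) c = (f ^^ j) c'" for j using assms(1) by (simp only: funpow_Suc_right comp_apply)
  have "S ((f ^^ j) c)" if "j \<le> Suc k" for j
    using that assms(2) k(2) shift by (cases j) auto
  then show ?thesis unfolding reaches_within_def using k(1) shift by blast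
qed

lemma reaches_within_trans:
  assumes "reaches_within f S c1 c2" "reaches_within f S c2 c3"
  shows "reaches_within f S c1 c3"
proof -
  obtain k1 where k1: "(f ^^ k1) c1 = c2" "\<forall>j\<le>k1. S ((f ^^ j) c1)"
    using assms(1) unfolding reaches_within_def by blast
  obtain k2 where k2: "(f ^^ k2) c2 = c3" "\<forall>j\<le>k2. S ((f ^^ j) c2)"
    using assms(2) unfolding reaches_within_def by blast
  have shift: "(f ^^ (j + k1)) c1 = (f ^^ j) c2" for j using k1(1) by (simp add: funpow_add)
  have "S ((f ^^ j) c1)" if "j \<le> k2 + k1" for j
  proof (cases "j \<le> k1")
    case False
    then have "j = (j - k1) + k1" "j - k1 \<le> k2" using that by auto
    then show ?thesis using shift[of "j - k1"] k2(2) by metis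
  qed (use k1(2) in simp)
  then show ?thesis unfolding reaches_within_def using shift k2(1) by blast
qed

lemma reaches_within_endpoints: "reaches_within f S c c' \<Longrightarrow> S c \<and> S c'"
  unfolding reaches_within_def by force

lemma reaches_within_simulation:
  assumes sim: "\<And>c tc. S c \<Longrightarrow> S (f c) \<Longrightarrow> Rel c tc \<Longrightarrow> \<exists>tc'. reaches_within g T tc tc' \<and> Rel (f c) tc'"
    and inv: "\<And>c tc. Rel c tc \<Longrightarrow> T tc"
    and run: "reaches_within f S c c'" and start: "Rel c tc"
  shows "\<exists>tc'. reaches_within g T tc tc' \<and> Rel c' tc'"
proof -
  obtain k where k: "(f ^^ k) c = c'" "\<forall>j\<le>k. S ((f ^^ j) c)"
    using run unfolding reaches_within_def by blast
  have "\<exists>tc'. reaches_within g T tc tc' \<and> Rel ((f ^^ j) c) tc'" if "j \<le> k" for j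
    using that
  proof (induction j)
    case 0
    then show ?case using start inv reaches_within_refl by fastforce
  next
    case (Suc j)
    then obtain tc1 where tc1: "reaches_within g T tc tc1" "Rel ((f ^^ j) c) tc1" by auto
    moreover have "S ((f ^^ j) c)" "S (f ((f ^^ j) c))" using k(2) Suc.prems by auto
    ultimately obtain tc2 where "reaches_within g T tc1 tc2" "Rel (f ((f ^^ j) c)) tc2"
      using sim by blast
    then show ?case using reaches_within_trans[OF tc1(1)] by auto
  qed
  then show ?thesis using k(1) by blast
qed

section \<open>Counter machines with a read-only input head\<close>

datatype instr =
    Inc nat nat
  | Clear nat nat
  | Jump_eq nat nat nat nat
  | Move_left nat
  | Move_right nat
  | Branch_sym nat nat nat
  | Goto nat
  | Accept
  | Reject

definition branch :: "nat \<Rightarrow> nat \<Rightarrow> nat \<Rightarrow> nat \<Rightarrow> nat" where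
  "branch a p0 p1 p2 = (if a = 0 then p0 else if a = 1 then p1 else p2)"

text \<open>A configuration consists of the program counter, the input head position and the registers.\<close>

type_synonym cm_conf = "nat \<times> nat \<times> (nat \<Rightarrow> nat)"

fun exec_instr :: "bool list \<Rightarrow> instr \<Rightarrow> cm_conf \<Rightarrow> cm_conf" where
  "exec_instr w (Inc r p) (pc, ih, R) = (p, ih, R(r := Suc (R r)))"
| "exec_instr w (Clear r p) (pc, ih, R) = (p, ih, R(r := 0))"
| "exec_instr w (Jump_eq r s p1 p2) (pc, ih, R) = (if R r = R s then p1 else p2, ih, R)"
| "exec_instr w (Move_left p) (pc, ih, R) = (p, ih - 1, R)"
| "exec_instr w (Move_right p) (pc, ih, R) = (p, min (Suc (length w)) (Suc ih), R)"
| "exec_instr w (Branch_sym p0 p1 p2) (pc, ih, R) = (branch (inp_sym w ih) p0 p1 p2, ih, R)"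
| "exec_instr w (Goto p) (pc, ih, R) = (p, ih, R)"
| "exec_instr w Accept c = c"
| "exec_instr w Reject c = c"

definition cm_step :: "instr list \<Rightarrow> bool list \<Rightarrow> cm_conf \<Rightarrow> cm_conf" where
  "cm_step P w c = (if fst c < length P then exec_instr w (P ! fst c) c else c)"

lemma cm_step_at: "pc < length P \<Longrightarrow> P ! pc = ins \<Longrightarrow> cm_step P w (pc, ih, R) = exec_instr w ins (pc, ih, R)"
  unfolding cm_step_def by simp

definition regs_bounded :: "bool list \<Rightarrow> (nat \<Rightarrow> nat) \<Rightarrow> bool" where
  "regs_bounded w R \<longleftrightarrow> (\<forall>r. R r \<le> Suc (length w))"

text \<open>Only runs that respect these bounds are simulated, in logarithmic space.\<close>

definition cm_bounded :: "instr list \<Rightarrow> bool list \<Rightarrow> cm_conf \<Rightarrow> bool" where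
  "cm_bounded P w c \<longleftrightarrow> (case c of (pc, ih, R) \<Rightarrow> pc < length P \<and> ih \<le> Suc (length w) \<and> regs_bounded w R)"

lemma cm_bounded_iff [simp]:
  "cm_bounded P w (pc, ih, R) \<longleftrightarrow> pc < length P \<and> ih \<le> Suc (length w) \<and> regs_bounded w R"
  by (simp add: cm_bounded_def)

lemma regs_bounded_upd: "regs_bounded w R \<Longrightarrow> v \<le> Suc (length w) \<Longrightarrow> regs_bounded w (R(r := v))"
  unfolding regs_bounded_def by simp

lemma regs_bounded_le: "regs_bounded w R \<Longrightarrow> R r \<le> Suc (length w)"
  unfolding regs_bounded_def by simp

abbreviation cm_reaches :: "instr list \<Rightarrow> bool list \<Rightarrow> cm_conf \<Rightarrow> cm_conf \<Rightarrow> bool" where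
  "cm_reaches P w \<equiv> reaches_within (cm_step P w) (cm_bounded P w)"

lemma cm_reaches_step:
  "cm_step P w c = c' \<Longrightarrow> cm_bounded P w c \<Longrightarrow> cm_reaches P w c' c'' \<Longrightarrow> cm_reaches P w c c''"
  by (rule reaches_within_step)

lemma cm_reaches_refl: "cm_bounded P w c \<Longrightarrow> cm_reaches P w c c"
  by (rule reaches_within_refl)

section \<open>Compiling counter machines into Turing machines\<close>

text \<open>Work cell 0 holds the marker symbol 1 and work cell i + 1 holds 2 + x, where bit r of the byte
x is bit i of register r: the registers are stored in binary side by side, so the tape is only as
long as the binary expansion of the largest register. States 0 and 1 accept and reject, state 2
writes the marker, and instruction p is executed in the states 3 + 5 p + k: phase 0 dispatches,
phase 1 + c sweeps right carrying the flag c (the carry of an increment, or whether two registers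
were seen to differ), and phase 3 + c returns to the marker.\<close>

definition nregs :: nat where
  "nregs = 8"

fun is_register_instr :: "instr \<Rightarrow> bool" where
  "is_register_instr (Inc r p) = True"
| "is_register_instr (Clear r p) = True"
| "is_register_instr (Jump_eq r s p1 p2) = True"
| "is_register_instr _ = False"

fun sweep_init :: "instr \<Rightarrow> nat" where
  "sweep_init (Inc r p) = 1"
| "sweep_init _ = 0"

fun sweep_cell :: "instr \<Rightarrow> nat \<Rightarrow> nat \<Rightarrow> nat \<times> nat" where
  "sweep_cell (Inc r p) c x =
     (if c = 0 then (0, x) else if bit x r then (1, unset_bit r x) else (0, set_bit r x))"
| "sweep_cell (Clear r p) c x = (c, unset_bit r x)"
| "sweep_cell (Jump_eq r s p1 p2) c x = (if bit x r = bit x s then c else 1, x)"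
| "sweep_cell _ c x = (c, x)"

fun sweep_done :: "instr \<Rightarrow> nat \<Rightarrow> bool" where
  "sweep_done (Inc r p) c = (c = 0)"
| "sweep_done _ c = True"

fun sweep_target :: "instr \<Rightarrow> nat \<Rightarrow> nat" where
  "sweep_target (Inc r p) c = p"
| "sweep_target (Clear r p) c = p"
| "sweep_target (Jump_eq r s p1 p2) c = (if c = 0 then p1 else p2)"
| "sweep_target _ c = 0"

definition instr_state :: "nat \<Rightarrow> nat \<Rightarrow> nat" where
  "instr_state p k = 3 + 5 * p + k"

definition entry_state :: "instr list \<Rightarrow> nat \<Rightarrow> nat" where
  "entry_state P p = (if p < length P then instr_state p 0 else 1)"

definition fetch :: "instr list \<Rightarrow> nat \<Rightarrow> instr" where
  "fetch P p = (if p < length P then P ! p else Reject)"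

text \<open>On a blank cell the right sweep either turns back or, if a carry is pending, treats the
blank as the byte 0, because then s - 2 = 0 on the naturals.\<close>

definition phase_delta :: "instr list \<Rightarrow> nat \<Rightarrow> nat \<Rightarrow> nat \<Rightarrow> nat \<Rightarrow> nat \<times> nat \<times> int \<times> int" where
  "phase_delta P p k a s = (let ins = fetch P p in
     if k = 0 then
       (if is_register_instr ins then (instr_state p (Suc (sweep_init ins)), s, 0, 1) else
        (case ins of
          Move_left p' \<Rightarrow> (entry_state P p', s, -1, 0)
        | Move_right p' \<Rightarrow> (entry_state P p', s, 1, 0)
        | Goto p' \<Rightarrow> (entry_state P p', s, 0, 0)
        | Branch_sym p0 p1 p2 \<Rightarrow> (entry_state P (branch a p0 p1 p2), s, 0, 0)
        | Accept \<Rightarrow> (0, s, 0, 0)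
        | _ \<Rightarrow> (1, s, 0, 0)))
     else if k \<le> 2 then
       (if s = 0 \<and> sweep_done ins (k - 1) then (instr_state p (k + 2), 0, 0, -1)
        else (case sweep_cell ins (k - 1) (s - 2) of
          (c', x') \<Rightarrow> (instr_state p (Suc c'), 2 + take_bit nregs x', 0, 1)))
     else
       (if s = 1 then (entry_state P (sweep_target ins (k - 3)), 1, 0, 0)
        else (instr_state p k, s, 0, -1)))"

definition compiled_delta :: "instr list \<Rightarrow> nat \<Rightarrow> nat \<Rightarrow> nat \<Rightarrow> nat \<times> nat \<times> int \<times> int" where
  "compiled_delta P q a s =
     (if q = 2 then (entry_state P 0, 1, 0, 0)
      else if q < 2 then (q, s, 0, 0)
      else phase_delta P ((q - 3) div 5) ((q - 3) mod 5) a s)"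

definition compile :: "instr list \<Rightarrow> tm" where
  "compile P = \<lparr>nstates = 3 + 5 * length P, nsyms = 2 + 2 ^ nregs, start = 2, acc = 0, rej = 1,
     delta = compiled_delta P\<rparr>"

lemma compiled_delta_instr_state:
  "k < 5 \<Longrightarrow> compiled_delta P (instr_state p k) a s = phase_delta P p k a s"
  unfolding compiled_delta_def instr_state_def by simp

lemma sweep_cell_flag_le: "c \<le> 1 \<Longrightarrow> fst (sweep_cell ins c x) \<le> 1"
  by (cases ins) auto

lemma phase_delta_range:
  assumes "p < length P" "k < 5" "s < 2 + 2 ^ nregs"
  shows "case phase_delta P p k a s of (q', s', di, dw) \<Rightarrow>
    q' < 3 + 5 * length P \<and> s' < 2 + 2 ^ nregs \<and> di \<in> {-1, 0, 1} \<and> dw \<in> {-1, 0, 1}"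
proof -
  have entry: "entry_state P p' < 3 + 5 * length P" for p'
    unfolding entry_state_def instr_state_def by auto
  have state: "instr_state p j < 3 + 5 * length P" if "j < 5" for j
    using assms(1) that unfolding instr_state_def by simp
  consider "k = 0" | "k = 1 \<or> k = 2" | "k = 3 \<or> k = 4" using assms(2) by linarith
  then show ?thesis
  proof cases
    case 1
    then show ?thesis using entry state assms(3)
      by (cases "fetch P p") (auto simp: phase_delta_def Let_def)
  next
    case 2
    obtain c' x' where cx: "sweep_cell (fetch P p) (k - 1) (s - 2) = (c', x')" by fastforce
    have "c' \<le> 1" using sweep_cell_flag_le[of "k - 1" "fetch P p" "s - 2"] cx 2 by auto
    moreover have "k \<noteq> 0" "k \<le> 2" "take_bit nregs x' < 2 ^ nregs" using 2 by auto
    ultimately show ?thesis using cx state[of "Suc c'"] state[of "k + 2"]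
      by (simp add: phase_delta_def Let_def)
  next
    case 3
    then show ?thesis using entry state assms(3) by (auto simp: phase_delta_def Let_def)
  qed
qed

lemma wf_compile: "wf_tm (compile P)"
proof -
  have "case compiled_delta P q a s of (q', s', di, dw) \<Rightarrow>
      q' < 3 + 5 * length P \<and> s' < 2 + 2 ^ nregs \<and> di \<in> {-1, 0, 1} \<and> dw \<in> {-1, 0, 1}"
    if "q < 3 + 5 * length P" "s < 2 + 2 ^ nregs" for q a s
  proof (cases "q < 3")
    case False
    then have "q = instr_state ((q - 3) div 5) ((q - 3) mod 5)" unfolding instr_state_def by simp
    then show ?thesis
      using phase_delta_range[of "(q - 3) div 5" P "(q - 3) mod 5" s a] that False
      by (simp add: compiled_delta_def)
  qed (use that in \<open>auto simp: compiled_delta_def entry_state_def instr_state_def\<close>)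
  then show ?thesis unfolding wf_tm_def by (simp add: compile_def)
qed

abbreviation tm_reaches :: "tm \<Rightarrow> bool list \<Rightarrow> (nat \<Rightarrow> bool) \<Rightarrow> conf \<Rightarrow> conf \<Rightarrow> bool" where
  "tm_reaches M w S \<equiv> reaches_within (step M w) (\<lambda>c. S (work_head c))"

lemma tm_reaches_refl: "S (work_head c) \<Longrightarrow> tm_reaches M w S c c"
  by (rule reaches_within_refl)

lemma tm_reaches_step:
  "step M w c = c' \<Longrightarrow> S (work_head c) \<Longrightarrow> tm_reaches M w S c' c'' \<Longrightarrow> tm_reaches M w S c c''"
  by (rule reaches_within_step)

definition work_tape :: "nat list \<Rightarrow> nat \<Rightarrow> nat" where
  "work_tape cs i = (if i = 0 then 1 else if i \<le> length cs then 2 + cs ! (i - 1) else 0)"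

lemma work_tape_at: "work_tape (ds @ x # cs) (Suc (length ds)) = 2 + x"
  unfolding work_tape_def by (simp add: nth_append)

lemma work_tape_end: "work_tape cs (Suc (length cs)) = 0"
  unfolding work_tape_def by simp

lemma work_tape_upd: "(work_tape (ds @ x # cs))(Suc (length ds) := 2 + y) = work_tape ((ds @ [y]) @ cs)"
  unfolding work_tape_def by (auto simp: fun_eq_iff nth_append nth_Cons' split: if_splits)

lemma work_tape_snoc: "(work_tape cs)(Suc (length cs) := 2 + y) = work_tape (cs @ [y])"
  unfolding work_tape_def by (auto simp: fun_eq_iff nth_append)

lemma work_tape_inner: "1 \<le> j \<Longrightarrow> j \<le> length cs \<Longrightarrow> work_tape cs j \<ge> 2"
  unfolding work_tape_def by simp

fun sweep :: "instr \<Rightarrow> nat \<Rightarrow> nat list \<Rightarrow> nat \<times> nat list" where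
  "sweep ins c [] =
     (if sweep_done ins c then (c, []) else (fst (sweep_cell ins c 0), [take_bit nregs (snd (sweep_cell ins c 0))]))"
| "sweep ins c (x # xs) =
     (let r = sweep ins (fst (sweep_cell ins c x)) xs in (fst r, take_bit nregs (snd (sweep_cell ins c x)) # snd r))"

lemma sweep_done_after_extension: "\<not> sweep_done ins c \<Longrightarrow> sweep_done ins (fst (sweep_cell ins c 0))"
  by (cases ins) auto

lemma sweep_flag_le: "c \<le> 1 \<Longrightarrow> fst (sweep ins c cs) \<le> 1"
proof (induction cs arbitrary: c)
  case Nil
  then show ?case using sweep_cell_flag_le[OF Nil] by simp
next
  case (Cons x xs)
  then show ?case using sweep_cell_flag_le[OF Cons.prems] by (simp add: Let_def)
qed

lemma step_compile_instr_state:
  assumes "k < 5"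
  shows "step (compile P) w (instr_state p k, ih, wh, tp) =
    (case phase_delta P p k (inp_sym w ih) (tp wh) of (q', s', di, dw) \<Rightarrow>
      (q', nat (min (int (length w) + 1) (max 0 (int ih + di))), nat (max 0 (int wh + dw)), tp(wh := s')))"
proof -
  have "instr_state p k \<noteq> 0" "instr_state p k \<noteq> 1" by (simp_all add: instr_state_def)
  then show ?thesis unfolding step_def by (simp add: compile_def compiled_delta_instr_state[OF assms])
qed

lemma nat_max_0_minus_1: "nat (max 0 (int j - 1)) = j - 1"
  by (cases j) auto

context
  fixes P :: "instr list" and p :: nat and ins :: instr and w :: "bool list" and ih :: nat
  assumes fetched: "p < length P" "P ! p = ins" and ih: "ih \<le> Suc (length w)"
begin

lemma fetch_eq: "fetch P p = ins"
  using fetched by (simp add: fetch_def)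

lemma step_dispatch:
  "step (compile P) w (instr_state p 0, ih, j, tp) =
    (if is_register_instr ins then (instr_state p (Suc (sweep_init ins)), ih, Suc j, tp) else
     (case ins of
       Move_left p' \<Rightarrow> (entry_state P p', ih - 1, j, tp)
     | Move_right p' \<Rightarrow> (entry_state P p', min (Suc (length w)) (Suc ih), j, tp)
     | Goto p' \<Rightarrow> (entry_state P p', ih, j, tp)
     | Branch_sym p0 p1 p2 \<Rightarrow> (entry_state P (branch (inp_sym w ih) p0 p1 p2), ih, j, tp)
     | Accept \<Rightarrow> (0, ih, j, tp)
     | _ \<Rightarrow> (1, ih, j, tp)))"
  unfolding step_compile_instr_state[of 0, simplified] phase_delta_def fetch_eq
  using ih by (cases ins) (auto simp: nat_diff_distrib')

lemma step_sweep_turn: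
  assumes "c \<le> 1" "tp j = 0" "sweep_done ins c"
  shows "step (compile P) w (instr_state p (Suc c), ih, j, tp) = (instr_state p (c + 3), ih, j - 1, tp(j := 0))"
proof -
  have k5: "Suc c < 5" using assms by simp
  show ?thesis using assms ih unfolding step_compile_instr_state[OF k5]
    by (auto simp: phase_delta_def fetch_eq instr_state_def nat_max_0_minus_1)
qed

lemma step_sweep_cell:
  assumes "c \<le> 1" "\<not> (tp j = 0 \<and> sweep_done ins c)" "sweep_cell ins c (tp j - 2) = (c', x')"
  shows "step (compile P) w (instr_state p (Suc c), ih, j, tp) =
    (instr_state p (Suc c'), ih, Suc j, tp(j := 2 + take_bit nregs x'))"
proof -
  have k5: "Suc c < 5" using assms by simp
  show ?thesis using assms ih unfolding step_compile_instr_state[OF k5]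
    by (auto simp: phase_delta_def fetch_eq instr_state_def nat_add_distrib)
qed

lemma step_return_marker:
  assumes "c \<le> 1" "tp j = 1"
  shows "step (compile P) w (instr_state p (c + 3), ih, j, tp) = (entry_state P (sweep_target ins c), ih, j, tp)"
proof -
  have k5: "c + 3 < 5" using assms by simp
  show ?thesis using assms ih unfolding step_compile_instr_state[OF k5]
    by (auto simp: phase_delta_def fetch_eq instr_state_def nat_max_0_minus_1)
qed

lemma step_return_move:
  assumes "c \<le> 1" "tp j \<noteq> 1"
  shows "step (compile P) w (instr_state p (c + 3), ih, j, tp) = (instr_state p (c + 3), ih, j - 1, tp)"
proof -
  have k5: "c + 3 < 5" using assms by simp
  show ?thesis using assms ih unfolding step_compile_instr_state[OF k5]
    by (auto simp: phase_delta_def fetch_eq instr_state_def nat_max_0_minus_1)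
qed


lemma right_sweep_end:
  assumes "c \<le> 1" "\<forall>h \<le> length ds + length (snd (sweep ins c [])) + 1. S h"
  shows "tm_reaches (compile P) w S (instr_state p (Suc c), ih, Suc (length ds), work_tape ds)
    (instr_state p (fst (sweep ins c []) + 3), ih, length ds + length (snd (sweep ins c [])),
     work_tape (ds @ snd (sweep ins c [])))"
proof -
  have blank: "work_tape ds (Suc (length ds)) = 0" by (rule work_tape_end)
  show ?thesis
  proof (cases "sweep_done ins c")
    case True
    have turn: "step (compile P) w (instr_state p (Suc c), ih, Suc (length ds), work_tape ds) =
        (instr_state p (c + 3), ih, length ds, work_tape ds)"
      using step_sweep_turn[where tp="work_tape ds" and j="Suc (length ds)", OF assms(1) blank True] blank
      by (simp add: fun_upd_idem)
    have sweep: "sweep ins c [] = (c, [])" using True by simp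
    have "tm_reaches (compile P) w S (instr_state p (Suc c), ih, Suc (length ds), work_tape ds)
        (instr_state p (c + 3), ih, length ds, work_tape ds)"
      by (rule tm_reaches_step[OF turn _ tm_reaches_refl]) (use assms(2) sweep in \<open>auto simp: work_head_def\<close>)
    then show ?thesis using sweep by simp
  next
    case False
    \<comment> \<open>a pending carry extends the tape by one cell\<close>
    obtain c' x' where cx: "sweep_cell ins c 0 = (c', x')" by fastforce
    have c': "c' \<le> 1" "sweep_done ins c'"
      using sweep_cell_flag_le[OF assms(1), of ins 0] sweep_done_after_extension[OF False] cx by auto
    let ?ds' = "ds @ [take_bit nregs x']"
    have extend: "step (compile P) w (instr_state p (Suc c), ih, Suc (length ds), work_tape ds) =
        (instr_state p (Suc c'), ih, Suc (Suc (length ds)), work_tape ?ds')"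
      using step_sweep_cell[OF assms(1) _ , of "work_tape ds" "Suc (length ds)" c' x'] False cx blank
      unfolding work_tape_snoc by simp
    have turn: "step (compile P) w (instr_state p (Suc c'), ih, Suc (Suc (length ds)), work_tape ?ds') =
        (instr_state p (c' + 3), ih, Suc (length ds), work_tape ?ds')"
      using step_sweep_turn[OF c'(1) _ c'(2), of "work_tape ?ds'" "Suc (Suc (length ds))"]
        work_tape_end[of ?ds'] by (simp add: fun_upd_idem)
    have sweep: "sweep ins c [] = (c', [take_bit nregs x'])" using False cx by simp
    have "tm_reaches (compile P) w S (instr_state p (Suc c), ih, Suc (length ds), work_tape ds)
        (instr_state p (c' + 3), ih, Suc (length ds), work_tape ?ds')"
      by (rule tm_reaches_step[OF extend _ tm_reaches_step[OF turn _ tm_reaches_refl]])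
         (use assms(2) sweep in \<open>auto simp: work_head_def\<close>)
    then show ?thesis using sweep by simp
  qed
qed

lemma right_sweep:
  "c \<le> 1 \<Longrightarrow> (\<forall>h \<le> length ds + length (snd (sweep ins c cs)) + 1. S h) \<Longrightarrow>
    tm_reaches (compile P) w S (instr_state p (Suc c), ih, Suc (length ds), work_tape (ds @ cs))
      (instr_state p (fst (sweep ins c cs) + 3), ih, length ds + length (snd (sweep ins c cs)),
       work_tape (ds @ snd (sweep ins c cs)))"
proof (induction cs arbitrary: ds c)
  case Nil
  then show ?case using right_sweep_end[of c ds S] by simp
next
  case (Cons x cs)
  obtain c' x' where cx: "sweep_cell ins c x = (c', x')" by fastforce
  have c': "c' \<le> 1" using sweep_cell_flag_le[OF Cons.prems(1), of ins x] cx by simp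
  let ?ds' = "ds @ [take_bit nregs x']"
  have cell: "step (compile P) w (instr_state p (Suc c), ih, Suc (length ds), work_tape (ds @ x # cs)) =
      (instr_state p (Suc c'), ih, Suc (length ?ds'), work_tape (?ds' @ cs))"
    using step_sweep_cell[OF Cons.prems(1) _ , of "work_tape (ds @ x # cs)" "Suc (length ds)" c' x'] cx
    unfolding work_tape_at work_tape_upd by simp
  have "tm_reaches (compile P) w S (instr_state p (Suc c'), ih, Suc (length ?ds'), work_tape (?ds' @ cs))
      (instr_state p (fst (sweep ins c' cs) + 3), ih, length ?ds' + length (snd (sweep ins c' cs)),
       work_tape (?ds' @ snd (sweep ins c' cs)))"
    using Cons.prems(2) cx by (intro Cons.IH[OF c']) (simp add: Let_def)
  then have "tm_reaches (compile P) w S (instr_state p (Suc c), ih, Suc (length ds), work_tape (ds @ x # cs))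
      (instr_state p (fst (sweep ins c' cs) + 3), ih, length ?ds' + length (snd (sweep ins c' cs)),
       work_tape (?ds' @ snd (sweep ins c' cs)))"
    by (rule tm_reaches_step[OF cell, rotated]) (use Cons.prems(2) in \<open>simp add: work_head_def\<close>)
  moreover have "sweep ins c (x # cs) = (fst (sweep ins c' cs), take_bit nregs x' # snd (sweep ins c' cs))"
    using cx by (simp add: Let_def)
  ultimately show ?case by simp
qed

lemma return_sweep:
  assumes "c \<le> 1"
  shows "j \<le> length cs \<Longrightarrow> (\<forall>h \<le> j. S h) \<Longrightarrow>
    tm_reaches (compile P) w S (instr_state p (c + 3), ih, j, work_tape cs)
      (entry_state P (sweep_target ins c), ih, 0, work_tape cs)"
proof (induction j)
  case 0
  have "step (compile P) w (instr_state p (c + 3), ih, 0, work_tape cs) =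
      (entry_state P (sweep_target ins c), ih, 0, work_tape cs)"
    using step_return_marker[OF assms] by (simp add: work_tape_def)
  then show ?case
    by (rule tm_reaches_step[OF _ _ tm_reaches_refl]) (use 0 in \<open>auto simp: work_head_def\<close>)
next
  case (Suc j)
  have "step (compile P) w (instr_state p (c + 3), ih, Suc j, work_tape cs) =
      (instr_state p (c + 3), ih, j, work_tape cs)"
    using step_return_move[OF assms] work_tape_inner[of "Suc j" cs] Suc.prems(1) by simp
  then show ?case by (rule tm_reaches_step) (use Suc in \<open>auto simp: work_head_def\<close>)
qed

lemma register_instr_run:
  assumes "is_register_instr ins"
    and space: "\<forall>h \<le> length (snd (sweep ins (sweep_init ins) cs)) + 1. S h"
  shows "tm_reaches (compile P) w S (instr_state p 0, ih, 0, work_tape cs)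
    (entry_state P (sweep_target ins (fst (sweep ins (sweep_init ins) cs))), ih, 0,
     work_tape (snd (sweep ins (sweep_init ins) cs)))"
proof -
  let ?r = "sweep ins (sweep_init ins) cs"
  have init: "sweep_init ins \<le> 1" by (cases ins) auto
  have dispatch: "step (compile P) w (instr_state p 0, ih, 0, work_tape cs) =
      (instr_state p (Suc (sweep_init ins)), ih, Suc 0, work_tape cs)"
    using step_dispatch assms(1) by simp
  have "tm_reaches (compile P) w S (instr_state p (Suc (sweep_init ins)), ih, Suc 0, work_tape cs)
      (instr_state p (fst ?r + 3), ih, length (snd ?r), work_tape (snd ?r))"
    using right_sweep[OF init, of "[]" cs S] space by simp
  moreover have "tm_reaches (compile P) w S (instr_state p (fst ?r + 3), ih, length (snd ?r), work_tape (snd ?r))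
      (entry_state P (sweep_target ins (fst ?r)), ih, 0, work_tape (snd ?r))"
    using return_sweep[OF sweep_flag_le[OF init]] space by simp
  ultimately have "tm_reaches (compile P) w S (instr_state p (Suc (sweep_init ins)), ih, Suc 0, work_tape cs)
      (entry_state P (sweep_target ins (fst ?r)), ih, 0, work_tape (snd ?r))"
    by (rule reaches_within_trans)
  then show ?thesis by (rule tm_reaches_step[OF dispatch, rotated]) (use space in \<open>simp add: work_head_def\<close>)
qed
end

fun reg_value :: "nat \<Rightarrow> nat list \<Rightarrow> nat" where
  "reg_value r [] = 0"
| "reg_value r (x # xs) = (if bit x r then 1 else 0) + 2 * reg_value r xs"

lemma reg_value_take_bit: "r < nregs \<Longrightarrow> reg_value r (map (take_bit nregs) cs) = reg_value r cs"
  by (induction cs) (auto simp: bit_take_bit_iff)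

lemma reg_value_eq_iff: "reg_value r cs = reg_value s cs \<longleftrightarrow> (\<forall>x\<in>set cs. bit x r = bit x s)"
proof (induction cs)
  case (Cons x xs)
  have "(if bit x r then 1 else 0) + 2 * reg_value r xs = (if bit x s then 1 else 0) + 2 * reg_value s xs \<longleftrightarrow>
      bit x r = bit x s \<and> reg_value r xs = reg_value s xs"
    by (cases "bit x r"; cases "bit x s") presburger+
  then show ?case using Cons by simp
qed simp

lemma sweep_Inc_no_carry: "sweep (Inc r p) 0 cs = (0, map (take_bit nregs) cs)"
  by (induction cs) (auto simp: Let_def)

lemma sweep_Inc:
  assumes "r < nregs"
  shows "reg_value r (snd (sweep (Inc r p) 1 cs)) = Suc (reg_value r cs) \<and>
    (\<forall>r'. r' < nregs \<longrightarrow> r' \<noteq> r \<longrightarrow> reg_value r' (snd (sweep (Inc r p) 1 cs)) = reg_value r' cs) \<and>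
    (length (snd (sweep (Inc r p) 1 cs)) = length cs \<or>
     length (snd (sweep (Inc r p) 1 cs)) = Suc (length cs) \<and> Suc (reg_value r cs) = 2 ^ length cs)"
proof (induction cs)
  case Nil
  then show ?case using assms by (auto simp: bit_take_bit_iff bit_set_bit_iff bit_exp_iff)
next
  case (Cons x xs)
  show ?case
  proof (cases "bit x r")
    case True
    then have "sweep (Inc r p) 1 (x # xs) =
        (fst (sweep (Inc r p) 1 xs), take_bit nregs (unset_bit r x) # snd (sweep (Inc r p) 1 xs))"
      by (simp add: Let_def)
    then show ?thesis using Cons True assms by (auto simp: bit_take_bit_iff bit_unset_bit_iff)
  next
    case False
    then have "sweep (Inc r p) 1 (x # xs) = (0, take_bit nregs (set_bit r x) # map (take_bit nregs) xs)"
      by (simp add: Let_def sweep_Inc_no_carry)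
    then show ?thesis using False assms reg_value_take_bit by (auto simp: bit_take_bit_iff bit_set_bit_iff)
  qed
qed

lemma sweep_Clear: "sweep (Clear r p) c cs = (c, map (\<lambda>x. take_bit nregs (unset_bit r x)) cs)"
  by (induction cs) (auto simp: Let_def)

lemma reg_value_unset_bit:
  "r' < nregs \<Longrightarrow> reg_value r' (map (\<lambda>x. take_bit nregs (unset_bit r x)) cs) = (if r' = r then 0 else reg_value r' cs)"
  by (induction cs) (auto simp: bit_take_bit_iff bit_unset_bit_iff)

lemma sweep_Jump_eq:
  "c \<le> 1 \<Longrightarrow> sweep (Jump_eq r s p1 p2) c cs =
    (if c = 0 \<and> (\<forall>x\<in>set cs. bit x r = bit x s) then 0 else 1, map (take_bit nregs) cs)"
  by (induction cs arbitrary: c) (auto simp: Let_def)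

fun valid_instr :: "instr \<Rightarrow> bool" where
  "valid_instr (Inc r p) = (r < nregs)"
| "valid_instr (Clear r p) = (r < nregs)"
| "valid_instr (Jump_eq r s p1 p2) = (r < nregs \<and> s < nregs)"
| "valid_instr _ = True"

definition valid_program :: "instr list \<Rightarrow> bool" where
  "valid_program P \<longleftrightarrow> (\<forall>ins\<in>set P. valid_instr ins)"

definition tape_fits :: "bool list \<Rightarrow> nat list \<Rightarrow> bool" where
  "tape_fits w cs \<longleftrightarrow> length cs = 0 \<or> 2 ^ (length cs - 1) \<le> Suc (length w)"

definition in_log_space :: "bool list \<Rightarrow> nat \<Rightarrow> bool" where
  "in_log_space w h \<longleftrightarrow> 2 ^ (h - 2) \<le> Suc (length w)"

definition simulates :: "bool list \<Rightarrow> cm_conf \<Rightarrow> conf \<Rightarrow> bool" where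
  "simulates w c tc \<longleftrightarrow> (case c of (pc, ih, R) \<Rightarrow> \<exists>cs.
     tc = (instr_state pc 0, ih, 0, work_tape cs) \<and> (\<forall>r<nregs. reg_value r cs = R r) \<and> tape_fits w cs)"

lemma in_log_space_if_tape_fits: "tape_fits w cs \<Longrightarrow> h \<le> length cs + 1 \<Longrightarrow> in_log_space w h"
proof (cases "length cs = 0")
  case False
  assume "tape_fits w cs" "h \<le> length cs + 1"
  then have "(2::nat) ^ (h - 2) \<le> 2 ^ (length cs - 1)" "2 ^ (length cs - 1) \<le> Suc (length w)"
    using False unfolding tape_fits_def by (auto intro: power_increasing)
  then show ?thesis unfolding in_log_space_def by linarith
qed (auto simp: in_log_space_def)

lemma entry_state_eq: "p < length P \<Longrightarrow> entry_state P p = instr_state p 0"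
  unfolding entry_state_def by simp

lemma sweep_simulates_register_instr:
  assumes ins: "pc < length P" "P ! pc = ins" "valid_instr ins" "is_register_instr ins"
    and regs: "\<forall>r<nregs. reg_value r cs = R r" and fits: "tape_fits w cs"
    and next_conf: "cm_step P w (pc, ih, R) = (pc', ih', R')" "regs_bounded w R'"
  defines "result \<equiv> sweep ins (sweep_init ins) cs"
  shows "sweep_target ins (fst result) = pc' \<and> ih' = ih \<and>
    (\<forall>r<nregs. reg_value r (snd result) = R' r) \<and> tape_fits w (snd result)"
proof -
  have next_conf': "exec_instr w ins (pc, ih, R) = (pc', ih', R')"
    using cm_step_at[OF ins(1,2)] next_conf(1) by simp
  show ?thesis
  proof (cases ins)
    case (Inc r p)
    then have r: "r < nregs" using ins(3) by simp
    have R': "R' = R(r := Suc (R r))" and "pc' = p" "ih' = ih" using next_conf' next_conf(1) Inc by auto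
    moreover have "Suc (R r) \<le> Suc (length w)"
      using next_conf(2) regs_bounded_le[of w R' r] R' by simp
    \<comment> \<open>the tape grows only when the register reaches a power of two\<close>
    ultimately show ?thesis
      using sweep_Inc[OF r, of p cs] regs r fits unfolding result_def Inc tape_fits_def by auto
  next
    case (Clear r p)
    then show ?thesis
      using next_conf' next_conf(1) ins(3) regs fits
      by (auto simp: result_def sweep_Clear reg_value_unset_bit tape_fits_def)
  next
    case (Jump_eq r s p1 p2)
    then have "sweep ins (sweep_init ins) cs = (if R r = R s then 0 else 1, map (take_bit nregs) cs)"
      using ins(3) regs sweep_Jump_eq[of 0 r s p1 p2 cs] reg_value_eq_iff[of r cs s] by simp
    then show ?thesis
      using Jump_eq next_conf' next_conf(1) regs fits reg_value_take_bit
      by (auto simp: result_def tape_fits_def)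
  qed (use ins(4) in auto)
qed

lemma step_head_instr:
  assumes "pc < length P" "P ! pc = ins" "ih \<le> Suc (length w)"
    and "\<not> is_register_instr ins" "ins \<noteq> Accept" "ins \<noteq> Reject"
    and "cm_step P w (pc, ih, R) = (pc', ih', R')" "pc' < length P"
  shows "step (compile P) w (instr_state pc 0, ih, j, tp) = (instr_state pc' 0, ih', j, tp) \<and> R' = R"
  using step_dispatch[OF assms(1-3)] cm_step_at[OF assms(1,2)] assms(4-7) entry_state_eq[OF assms(8)]
  by (cases ins) auto

lemma simulate_step:
  assumes valid: "valid_program P" and bounded: "cm_bounded P w c" "cm_bounded P w (cm_step P w c)"
    and sim: "simulates w c tc"
  shows "\<exists>tc'. tm_reaches (compile P) w (in_log_space w) tc tc' \<and> simulates w (cm_step P w c) tc'"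
proof -
  obtain pc ih R where c: "c = (pc, ih, R)" by (cases c)
  obtain pc' ih' R' where c': "cm_step P w c = (pc', ih', R')" by (cases "cm_step P w c")
  obtain cs where tc: "tc = (instr_state pc 0, ih, 0, work_tape cs)"
    and regs: "\<forall>r<nregs. reg_value r cs = R r" and fits: "tape_fits w cs"
    using sim unfolding simulates_def c by auto
  have pc: "pc < length P" and ih: "ih \<le> Suc (length w)" using bounded(1) c by auto
  have pc': "pc' < length P" and R': "regs_bounded w R'" using bounded(2) c' by auto
  define ins where "ins = P ! pc"
  have ins: "P ! pc = ins" "valid_instr ins" using valid pc unfolding valid_program_def ins_def by auto
  have step_at: "cm_step P w (pc, ih, R) = (pc', ih', R')" using c c' by simp
  have space0: "in_log_space w (work_head tc)" by (simp add: tc work_head_def in_log_space_def)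
  show ?thesis
  proof (cases "is_register_instr ins")
    case True
    let ?r = "sweep ins (sweep_init ins) cs"
    have res: "sweep_target ins (fst ?r) = pc'" "ih' = ih" "\<forall>r<nregs. reg_value r (snd ?r) = R' r"
      "tape_fits w (snd ?r)"
      using sweep_simulates_register_instr[OF pc ins True regs fits step_at R'] by auto
    have "tm_reaches (compile P) w (in_log_space w) tc
        (entry_state P (sweep_target ins (fst ?r)), ih, 0, work_tape (snd ?r))"
      unfolding tc using register_instr_run[OF pc ins(1) ih True] in_log_space_if_tape_fits[OF res(4)] by simp
    moreover have "simulates w (cm_step P w c) (entry_state P (sweep_target ins (fst ?r)), ih, 0, work_tape (snd ?r))"
      unfolding c' simulates_def using res pc' entry_state_eq by auto
    ultimately show ?thesis by blast
  next
    case False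
    show ?thesis
    proof (cases "ins = Accept \<or> ins = Reject")
      case True
      then have "cm_step P w c = c" using cm_step_at[OF pc ins(1)] c by auto
      moreover have "tm_reaches (compile P) w (in_log_space w) tc tc" using space0 by (rule tm_reaches_refl)
      ultimately show ?thesis using sim by metis
    next
      case not_halt: False
      have step: "step (compile P) w tc = (instr_state pc' 0, ih', 0, work_tape cs)" and "R' = R"
        using step_head_instr[OF pc ins(1) ih False _ _ step_at pc'] not_halt unfolding tc by auto
      then have "simulates w (cm_step P w c) (instr_state pc' 0, ih', 0, work_tape cs)"
        using c' regs fits unfolding simulates_def by auto
      moreover have "tm_reaches (compile P) w (in_log_space w) tc (instr_state pc' 0, ih', 0, work_tape cs)"
        by (rule tm_reaches_step[OF step space0 tm_reaches_refl[where S = "in_log_space w"]])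
           (simp add: work_head_def in_log_space_def)
      ultimately show ?thesis by blast
    qed
  qed
qed

lemma simulate_run:
  assumes "valid_program P" "cm_reaches P w c c'" "simulates w c tc"
  shows "\<exists>tc'. tm_reaches (compile P) w (in_log_space w) tc tc' \<and> simulates w c' tc'"
  using reaches_within_simulation[where Rel = "simulates w", OF simulate_step[OF assms(1)] _ assms(2,3)]
  by (auto simp: simulates_def work_head_def in_log_space_def)

lemma compile_halts:
  assumes valid: "valid_program P" and run: "cm_reaches P w (0, 0, \<lambda>_. 0) (q, ih, R)"
    and halt: "P ! q = Accept \<or> P ! q = Reject"
  shows "\<exists>t. state_of (run (compile P) w t) = (if P ! q = Accept then 0 else 1) \<and>
    (\<forall>t'\<le>t. in_log_space w (work_head (run (compile P) w t')))"
proof -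
  let ?M = "compile P"
  have P: "0 < length P" and q: "q < length P" and ih: "ih \<le> Suc (length w)"
    using reaches_within_endpoints[OF run] by auto
  have "(\<lambda>_. 0::nat)(0 := 1) = work_tape []" by (auto simp: work_tape_def)
  then have start: "step ?M w (init_conf ?M) = (instr_state 0 0, 0, 0, work_tape [])"
    using P by (simp add: init_conf_def step_def compile_def compiled_delta_def entry_state_eq)
  have "simulates w (0, 0, \<lambda>_. 0) (instr_state 0 0, 0, 0, work_tape [])"
    unfolding simulates_def tape_fits_def by (simp, intro exI[of _ "[]"]) simp
  then obtain tc where reach: "tm_reaches ?M w (in_log_space w) (instr_state 0 0, 0, 0, work_tape []) tc"
    and "simulates w (q, ih, R) tc"
    using simulate_run[OF valid run] by blast
  then obtain cs where tc: "tc = (instr_state q 0, ih, 0, work_tape cs)" unfolding simulates_def by auto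
  define final where "final = (if P ! q = Accept then 0 else 1::nat, ih, 0::nat, work_tape cs)"
  have "step ?M w (instr_state q 0, ih, 0, work_tape cs) = final"
    using step_dispatch[OF q refl ih] halt unfolding final_def by auto
  then have "tm_reaches ?M w (in_log_space w) (instr_state q 0, ih, 0, work_tape cs) final"
    by (rule tm_reaches_step[OF _ _ tm_reaches_refl]) (simp_all add: final_def work_head_def in_log_space_def)
  with reach[unfolded tc] have "tm_reaches ?M w (in_log_space w) (instr_state 0 0, 0, 0, work_tape []) final"
    by (rule reaches_within_trans)
  then have "tm_reaches ?M w (in_log_space w) (init_conf ?M) final"
    by (rule tm_reaches_step[OF start, rotated]) (simp add: init_conf_def work_head_def in_log_space_def)
  then obtain t where "(step ?M w ^^ t) (init_conf ?M) = final"
    "\<forall>j\<le>t. in_log_space w (work_head ((step ?M w ^^ j) (init_conf ?M)))"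
    unfolding reaches_within_def by blast
  then show ?thesis by (intro exI[of _ t]) (simp add: run_def state_of_def final_def)
qed

lemma run_halted_stays:
  assumes "state_of (run M w t) = acc M \<or> state_of (run M w t) = rej M"
  shows "run M w (t + k) = run M w t"
proof (induction k)
  case (Suc k)
  have "run M w (t + Suc k) = step M w (run M w t)" using Suc by (simp add: run_def)
  also have "\<dots> = run M w t" using assms by (cases "run M w t") (auto simp: step_def state_of_def)
  finally show ?case .
qed simp

lemma accepts_iff_halted_accepting:
  assumes "state_of (run M w t) = acc M \<or> state_of (run M w t) = rej M"
  shows "accepts M w \<longleftrightarrow> state_of (run M w t) = acc M"
proof
  assume "accepts M w"
  then obtain t' where t': "state_of (run M w t') = acc M" unfolding accepts_def by blast
  \<comment> \<open>both runs have halted by time t + t', so they agree there\<close>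
  have "run M w t = run M w (t + t')" "run M w t' = run M w (t' + t)"
    using run_halted_stays[of M w t t'] run_halted_stays[of M w t' t] assms t' by auto
  then show "state_of (run M w t) = acc M" using t' by (simp add: add.commute)
qed (auto simp: accepts_def)

lemma in_log_space_bound:
  assumes "in_log_space w h"
  shows "real h \<le> 2 * log 2 (real (length w) + 2) + 2"
proof (cases "h \<le> 2")
  case False
  have "(2::real) ^ (h - 2) \<le> real (length w) + 1"
    using assms unfolding in_log_space_def by (metis of_nat_Suc of_nat_le_iff of_nat_numeral of_nat_power add.commute)
  then have "real (h - 2) \<le> log 2 (real (length w) + 1)"
    by (simp add: le_log_iff powr_realpow)
  moreover have "log 2 (real (length w) + 1) \<le> log 2 (real (length w) + 2)" by simp
  moreover have "1 \<le> log 2 (real (length w) + 2)" by simp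
  ultimately show ?thesis using False by linarith
next
  case True
  moreover have "1 \<le> log 2 (real (length w) + 2)" by simp
  ultimately show ?thesis by linarith
qed

definition cm_decides :: "instr list \<Rightarrow> bool list set \<Rightarrow> bool" where
  "cm_decides P L \<longleftrightarrow> (\<forall>w. \<exists>q ih R.
     cm_reaches P w (0, 0, \<lambda>_. 0) (q, ih, R) \<and> P ! q = (if w \<in> L then Accept else Reject))"

theorem compile_decides_in_logspace:
  assumes valid: "valid_program P" and decides: "cm_decides P L"
  shows "wf_tm (compile P) \<and> logspace_tm (compile P) \<and> decides (compile P) L"
proof -
  let ?M = "compile P"
  have halts: "\<exists>t. state_of (run ?M w t) = (if w \<in> L then acc ?M else rej ?M) \<and>
      (\<forall>t'\<le>t. real (work_head (run ?M w t')) \<le> 2 * log 2 (real (length w) + 2) + 2)" for w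
  proof -
    obtain q ih R where "cm_reaches P w (0, 0, \<lambda>_. 0) (q, ih, R)" "P ! q = (if w \<in> L then Accept else Reject)"
      using decides unfolding cm_decides_def by blast
    moreover have "(P ! q = Accept) \<longleftrightarrow> w \<in> L" using \<open>P ! q = _\<close> by simp
    ultimately obtain t where "state_of (run ?M w t) = (if w \<in> L then acc ?M else rej ?M)"
      "\<forall>t'\<le>t. in_log_space w (work_head (run ?M w t'))"
      using compile_halts[OF valid] by (fastforce simp: compile_def)
    then show ?thesis using in_log_space_bound by blast
  qed
  have "logspace_tm ?M"
  proof -
    have "\<exists>t. (state_of (run ?M w t) = acc ?M \<or> state_of (run ?M w t) = rej ?M) \<and>
        (\<forall>t'\<le>t. real (work_head (run ?M w t')) \<le> 2 * log 2 (real (length w) + 2) + 2)" for w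
      using halts[of w] by (cases "w \<in> L") auto
    then show ?thesis unfolding logspace_tm_def by blast
  qed
  moreover have "accepts ?M w \<longleftrightarrow> w \<in> L" for w
  proof -
    obtain t where "state_of (run ?M w t) = (if w \<in> L then acc ?M else rej ?M)" using halts by blast
    then show ?thesis using accepts_iff_halted_accepting[of ?M w t] by (auto simp: compile_def)
  qed
  ultimately show ?thesis using wf_compile unfolding decides_def by blast
qed

definition code_at :: "instr list \<Rightarrow> nat \<Rightarrow> instr list \<Rightarrow> bool" where
  "code_at P b xs \<longleftrightarrow> b + length xs \<le> length P \<and> take (length xs) (drop b P) = xs"

lemma code_at_nth:
  assumes "code_at P b xs" "i < length xs"
  shows "b + i < length P" "P ! (b + i) = xs ! i"
proof -
  have "b + length xs \<le> length P" "take (length xs) (drop b P) = xs" using assms(1) unfolding code_at_def by auto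
  then show "b + i < length P" "P ! (b + i) = xs ! i" using assms(2) by (auto dest: arg_cong[of _ _ "\<lambda>xs. xs ! i"])
qed

lemma cm_step_code_at:
  "code_at P b xs \<Longrightarrow> i < length xs \<Longrightarrow> cm_step P w (b + i, ih, R) = exec_instr w (xs ! i) (b + i, ih, R)"
  using cm_step_at code_at_nth by blast

lemma code_at_sub:
  assumes "code_at P b xs" "j + length ys \<le> length xs" "take (length ys) (drop j xs) = ys"
  shows "code_at P (b + j) ys"
proof -
  have P: "b + length xs \<le> length P" "take (length xs) (drop b P) = xs" using assms(1) unfolding code_at_def by auto
  have "take (length ys) (drop (b + j) P) = take (length ys) (drop j (take (length xs) (drop b P)))"
    using assms(2) by (simp add: drop_take add.commute min_def)
  then show ?thesis unfolding code_at_def using P assms(2,3) by simp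
qed

definition rewind_code :: "nat \<Rightarrow> instr list" where
  "rewind_code b = [Move_left (b + 1), Branch_sym (b + 2) b b]"

definition advance_code :: "nat \<Rightarrow> nat \<Rightarrow> nat \<Rightarrow> instr list" where
  "advance_code b t x = [Clear t (b + 1), Jump_eq t x (b + 4) (b + 2), Inc t (b + 3), Move_right (b + 1)]"

lemma rewind:
  assumes code: "code_at P b (rewind_code b)" and exit: "b + 2 < length P" and R: "regs_bounded w R"
  shows "ih \<le> Suc (length w) \<Longrightarrow> cm_reaches P w (b, ih, R) (b + 2, 0, R)"
proof (induction ih)
  case 0
  have left: "cm_step P w (b, 0, R) = (b + 1, 0, R)"
    using cm_step_code_at[OF code, of 0 w 0 R] by (simp add: rewind_code_def)
  have branch: "cm_step P w (b + 1, 0, R) = (b + 2, 0, R)"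
    using cm_step_code_at[OF code, of 1 w 0 R] by (simp add: rewind_code_def branch_def inp_sym_def)
  show ?case
    by (rule cm_reaches_step[OF left _ cm_reaches_step[OF branch _ cm_reaches_refl]]) (use exit R in auto)
next
  case (Suc i)
  have left: "cm_step P w (b, Suc i, R) = (b + 1, i, R)"
    using cm_step_code_at[OF code, of 0 w "Suc i" R] by (simp add: rewind_code_def)
  have branch: "cm_step P w (b + 1, i, R) = (if i = 0 then b + 2 else b, i, R)"
    using cm_step_code_at[OF code, of 1 w i R] Suc.prems by (simp add: rewind_code_def branch_def inp_sym_def)
  show ?case
  proof (cases "i = 0")
    case True
    then have "cm_step P w (b + 1, i, R) = (b + 2, 0, R)" using branch by simp
    then show ?thesis using True
      by (intro cm_reaches_step[OF left _ cm_reaches_step[OF _ _ cm_reaches_refl]]) (use exit R in auto)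
  next
    case False
    then have "cm_step P w (b + 1, i, R) = (b, i, R)" using branch by simp
    then show ?thesis
      by (intro cm_reaches_step[OF left _ cm_reaches_step[OF _ _ Suc.IH]]) (use exit R Suc.prems in auto)
  qed
qed

lemma advance_loop:
  assumes code: "code_at P b (advance_code b t x)" and exit: "b + 4 < length P" and "t \<noteq> x"
    and R: "regs_bounded w R"
  shows "i \<le> R x \<Longrightarrow> ih \<le> Suc (length w) \<Longrightarrow>
    cm_reaches P w (b + 1, ih, R(t := i)) (b + 4, min (Suc (length w)) (ih + (R x - i)), R(t := R x))"
proof (induction "R x - i" arbitrary: i ih)
  case 0
  then have i: "i = R x" by simp
  have test: "cm_step P w (b + 1, ih, R(t := i)) = (b + 4, ih, R(t := R x))"
    using cm_step_code_at[OF code, of 1 w ih "R(t := i)"] \<open>t \<noteq> x\<close> i by (simp add: advance_code_def)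
  have ih': "min (Suc (length w)) (ih + (R x - i)) = ih" using 0 by simp
  show ?case unfolding ih'
    by (rule cm_reaches_step[OF test _ cm_reaches_refl])
       (use 0 exit R regs_bounded_le[OF R, of x] i in \<open>auto intro!: regs_bounded_upd\<close>)
next
  case (Suc k)
  have i: "i < R x" using Suc by simp
  let ?ih' = "min (Suc (length w)) (Suc ih)"
  have test: "cm_step P w (b + 1, ih, R(t := i)) = (b + 2, ih, R(t := i))"
    using cm_step_code_at[OF code, of 1 w ih "R(t := i)"] \<open>t \<noteq> x\<close> i by (simp add: advance_code_def)
  have inc: "cm_step P w (b + 2, ih, R(t := i)) = (b + 3, ih, R(t := Suc i))"
    using cm_step_code_at[OF code, of 2 w ih "R(t := i)"] by (simp add: advance_code_def)
  have right: "cm_step P w (b + 3, ih, R(t := Suc i)) = (b + 1, ?ih', R(t := Suc i))"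
    using cm_step_code_at[OF code, of 3 w ih "R(t := Suc i)"] by (simp add: advance_code_def)
  have "cm_reaches P w (b + 1, ?ih', R(t := Suc i))
      (b + 4, min (Suc (length w)) (?ih' + (R x - Suc i)), R(t := R x))"
    using Suc.hyps(2) i by (intro Suc.hyps(1)) auto
  moreover have "min (Suc (length w)) (?ih' + (R x - Suc i)) = min (Suc (length w)) (ih + (R x - i))"
    using i by (simp add: min_def; arith)
  moreover have "regs_bounded w (R(t := i))" "regs_bounded w (R(t := Suc i))"
    using R i regs_bounded_le[OF R, of x] by (auto intro!: regs_bounded_upd)
  ultimately show ?case
    by (intro cm_reaches_step[OF test _ cm_reaches_step[OF inc _ cm_reaches_step[OF right]]]) (use exit Suc.prems in auto)
qed

lemma advance:
  assumes code: "code_at P b (advance_code b t x)" and exit: "b + 4 < length P" and "t \<noteq> x"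
    and R: "regs_bounded w R" and ih: "ih \<le> Suc (length w)"
  shows "cm_reaches P w (b, ih, R) (b + 4, min (Suc (length w)) (ih + R x), R(t := R x))"
proof -
  have clear: "cm_step P w (b, ih, R) = (b + 1, ih, R(t := 0))"
    using cm_step_code_at[OF code, of 0 w ih R] by (simp add: advance_code_def)
  have "cm_reaches P w (b + 1, ih, R(t := 0)) (b + 4, min (Suc (length w)) (ih + R x), R(t := R x))"
    using advance_loop[OF assms(1-4), of 0 ih] ih by simp
  then show ?thesis by (rule cm_reaches_step[OF clear, rotated]) (use ih exit R in auto)
qed

text \<open>The fragment moves the input head to the entry of the adjacency matrix in row R x and column
R y, where R 0 is the side length, and branches on the symbol found there; registers 6 and 7
serve as counters.\<close>

definition read_code :: "nat \<Rightarrow> nat \<Rightarrow> nat \<Rightarrow> nat \<Rightarrow> nat \<Rightarrow> nat \<Rightarrow> instr list" where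
  "read_code b x y p0 p1 p2 =
     rewind_code b @ [Move_right (b + 3), Clear 6 (b + 4), Jump_eq 6 x (b + 11) (b + 5), Inc 6 (b + 6)] @
     advance_code (b + 6) 7 0 @ [Goto (b + 4)] @ advance_code (b + 11) 7 y @ [Branch_sym p0 p1 p2]"

lemma length_read_code: "length (read_code b x y p0 p1 p2) = 16"
  by (simp add: read_code_def rewind_code_def advance_code_def)

lemma read_rows:
  assumes code: "code_at P b (read_code b x y p0 p1 p2)" and x: "x \<noteq> 6" "x \<noteq> 7"
    and R: "regs_bounded w R"
  shows "i \<le> R x \<Longrightarrow> u \<le> Suc (length w) \<Longrightarrow> \<exists>u'.
    cm_reaches P w (b + 4, min (Suc (length w)) (Suc (i * R 0)), R(6 := i, 7 := u))
      (b + 11, min (Suc (length w)) (Suc (R x * R 0)), R(6 := R x, 7 := u'))"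
proof (induction "R x - i" arbitrary: i u)
  case 0
  then have i: "i = R x" by simp
  have len: "b + 16 \<le> length P" using code length_read_code unfolding code_at_def by metis
  have test: "cm_step P w (b + 4, min (Suc (length w)) (Suc (R x * R 0)), R(6 := R x, 7 := u)) =
      (b + 11, min (Suc (length w)) (Suc (R x * R 0)), R(6 := R x, 7 := u))"
    using cm_step_code_at[OF code, of 4] x by (simp add: read_code_def rewind_code_def)
  show ?case unfolding i
    by (rule exI[of _ u], rule cm_reaches_step[OF test _ cm_reaches_refl])
       (use len R 0 regs_bounded_le[OF R, of x] in \<open>auto intro!: regs_bounded_upd\<close>)
next
  case (Suc k)
  have i: "i < R x" using Suc by simp
  have len: "b + 16 \<le> length P" using code length_read_code unfolding code_at_def by metis
  let ?L = "Suc (length w)"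
  let ?ih = "min ?L (Suc (i * R 0))"
  have test: "cm_step P w (b + 4, ?ih, R(6 := i, 7 := u)) = (b + 5, ?ih, R(6 := i, 7 := u))"
    using cm_step_code_at[OF code, of 4] x i by (simp add: read_code_def rewind_code_def)
  have inc: "cm_step P w (b + 5, ?ih, R(6 := i, 7 := u)) = (b + 6, ?ih, R(6 := Suc i, 7 := u))"
    using cm_step_code_at[OF code, of 5] by (simp add: read_code_def rewind_code_def fun_eq_iff)
  have "code_at P (b + 6) (advance_code (b + 6) 7 0)"
    using code_at_sub[OF code, of 6] by (simp add: read_code_def rewind_code_def advance_code_def)
  moreover have "regs_bounded w (R(6 := Suc i, 7 := u))"
    using R Suc.prems i regs_bounded_le[OF R, of x] by (auto intro!: regs_bounded_upd)
  ultimately have row: "cm_reaches P w (b + 6, ?ih, R(6 := Suc i, 7 := u))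
      (b + 10, min ?L (?ih + R 0), R(6 := Suc i, 7 := R 0))"
    using advance[of P "b + 6" 7 0 w "R(6 := Suc i, 7 := u)" ?ih] len by (simp add: add.assoc)
  have next_row: "cm_step P w (b + 10, min ?L (?ih + R 0), R(6 := Suc i, 7 := R 0)) =
      (b + 4, min ?L (Suc (Suc i * R 0)), R(6 := Suc i, 7 := R 0))"
    using cm_step_code_at[OF code, of 10] by (simp add: read_code_def rewind_code_def advance_code_def min_def)
  obtain u' where "cm_reaches P w (b + 4, min ?L (Suc (Suc i * R 0)), R(6 := Suc i, 7 := R 0))
      (b + 11, min ?L (Suc (R x * R 0)), R(6 := R x, 7 := u'))"
  proof -
    have "k = R x - Suc i" using Suc.hyps(2) by arith
    then show ?thesis using Suc.hyps(1)[of "Suc i" "R 0"] i regs_bounded_le[OF R, of 0] that by auto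
  qed
  moreover have "regs_bounded w (R(6 := i, 7 := u))" "regs_bounded w (R(6 := Suc i, 7 := R 0))"
    using R Suc.prems i regs_bounded_le[OF R, of x] regs_bounded_le[OF R, of 0] by (auto intro!: regs_bounded_upd)
  ultimately have "cm_reaches P w (b + 4, ?ih, R(6 := i, 7 := u)) (b + 11, min ?L (Suc (R x * R 0)), R(6 := R x, 7 := u'))"
    using len
    by (intro cm_reaches_step[OF test _ cm_reaches_step[OF inc _ reaches_within_trans[OF row cm_reaches_step[OF next_row]]]])
       auto
  then show ?case by blast
qed

lemma read_entry:
  assumes code: "code_at P b (read_code b x y p0 p1 p2)" and xy: "x \<notin> {6, 7}" "y \<notin> {6, 7}"
    and targets: "p0 < length P" "p1 < length P" "p2 < length P"
    and R: "regs_bounded w R" and ih: "ih \<le> Suc (length w)"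
  defines "pos \<equiv> min (Suc (length w)) (Suc (R x * R 0 + R y))"
  shows "cm_reaches P w (b, ih, R) (branch (inp_sym w pos) p0 p1 p2, pos, R(6 := R x, 7 := R y))"
proof -
  let ?L = "Suc (length w)"
  have len: "b + 16 \<le> length P" using code length_read_code unfolding code_at_def by metis
  have "code_at P b (rewind_code b)"
    using code_at_sub[OF code, of 0] by (simp add: read_code_def rewind_code_def advance_code_def)
  then have rewind: "cm_reaches P w (b, ih, R) (b + 2, 0, R)" using rewind len R ih by simp
  have right: "cm_step P w (b + 2, 0, R) = (b + 3, 1, R)"
    using cm_step_code_at[OF code, of 2 w 0 R] by (simp add: read_code_def rewind_code_def)
  have clear: "cm_step P w (b + 3, 1, R) = (b + 4, min ?L (Suc (0 * R 0)), R(6 := 0, 7 := R 7))"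
    using cm_step_code_at[OF code, of 3 w 1 R] by (simp add: read_code_def rewind_code_def fun_eq_iff)
  obtain u' where rows: "cm_reaches P w (b + 4, min ?L (Suc (0 * R 0)), R(6 := 0, 7 := R 7))
      (b + 11, min ?L (Suc (R x * R 0)), R(6 := R x, 7 := u'))"
    using read_rows[OF code _ _ R, of 0 "R 7"] xy regs_bounded_le[OF R, of 7] by auto
  have "code_at P (b + 11) (advance_code (b + 11) 7 y)"
    using code_at_sub[OF code, of 11] by (simp add: read_code_def rewind_code_def advance_code_def)
  moreover have "regs_bounded w (R(6 := R x, 7 := u'))" using reaches_within_endpoints[OF rows] by simp
  ultimately have "cm_reaches P w (b + 11, min ?L (Suc (R x * R 0)), R(6 := R x, 7 := u'))
      (b + 15, min ?L (min ?L (Suc (R x * R 0)) + R y), (R(6 := R x, 7 := u'))(7 := R y))"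
    using advance[of P "b + 11" 7 y w "R(6 := R x, 7 := u')" "min ?L (Suc (R x * R 0))"] len xy
    by (simp add: add.assoc)
  moreover have "min ?L (min ?L (Suc (R x * R 0)) + R y) = pos" by (simp add: pos_def min_def)
  ultimately have columns: "cm_reaches P w (b + 11, min ?L (Suc (R x * R 0)), R(6 := R x, 7 := u'))
      (b + 15, pos, R(6 := R x, 7 := R y))"
    by simp
  have branch: "cm_step P w (b + 15, pos, R(6 := R x, 7 := R y)) =
      (branch (inp_sym w pos) p0 p1 p2, pos, R(6 := R x, 7 := R y))"
    using cm_step_code_at[OF code, of 15] by (simp add: read_code_def rewind_code_def advance_code_def)
  have "regs_bounded w (R(6 := R x, 7 := R y))" "regs_bounded w (R(6 := 0, 7 := R 7))"
    using R regs_bounded_le[OF R] by (auto intro!: regs_bounded_upd)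
  moreover have "branch (inp_sym w pos) p0 p1 p2 < length P" using targets by (simp add: branch_def)
  ultimately show ?thesis
    using len R ih
    by (intro reaches_within_trans[OF rewind cm_reaches_step[OF right _ cm_reaches_step[OF clear _
          reaches_within_trans[OF rows reaches_within_trans[OF columns cm_reaches_step[OF branch _ cm_reaches_refl]]]]]])
       (auto simp: pos_def)
qed

definition reaches_pc :: "instr list \<Rightarrow> bool list \<Rightarrow> cm_conf \<Rightarrow> nat \<Rightarrow> ((nat \<Rightarrow> nat) \<Rightarrow> bool) \<Rightarrow> bool" where
  "reaches_pc P w c q Q \<longleftrightarrow> (\<exists>ih R. cm_reaches P w c (q, ih, R) \<and> Q R)"

lemma reaches_pcI: "cm_bounded P w (q, ih, R) \<Longrightarrow> Q R \<Longrightarrow> reaches_pc P w (q, ih, R) q Q"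
  unfolding reaches_pc_def using cm_reaches_refl by blast

lemma reaches_pc_step:
  "cm_step P w c = c' \<Longrightarrow> cm_bounded P w c \<Longrightarrow> reaches_pc P w c' q Q \<Longrightarrow> reaches_pc P w c q Q"
  unfolding reaches_pc_def using cm_reaches_step by blast

lemma reaches_pc_trans: "cm_reaches P w c c' \<Longrightarrow> reaches_pc P w c' q Q \<Longrightarrow> reaches_pc P w c q Q"
  unfolding reaches_pc_def by (meson reaches_within_trans)

lemma reaches_pc_then:
  assumes "reaches_pc P w c q Q"
    and "\<And>ih R. cm_bounded P w (q, ih, R) \<Longrightarrow> Q R \<Longrightarrow> reaches_pc P w (q, ih, R) q' Q'"
  shows "reaches_pc P w c q' Q'"
proof -
  obtain ih R where "cm_reaches P w c (q, ih, R)" "Q R" using assms(1) unfolding reaches_pc_def by blast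
  then show ?thesis using assms(2) reaches_within_endpoints reaches_pc_trans by metis
qed

lemma reaches_pc_mono: "reaches_pc P w c q Q \<Longrightarrow> (\<And>R. Q R \<Longrightarrow> Q' R) \<Longrightarrow> reaches_pc P w c q Q'"
  unfolding reaches_pc_def by blast

definition regs_agree :: "nat \<Rightarrow> (nat \<Rightarrow> nat) \<Rightarrow> (nat \<Rightarrow> nat) \<Rightarrow> bool" where
  "regs_agree k R X \<longleftrightarrow> (\<forall>r<k. X r = R r)"

lemma regs_agree_trans: "regs_agree k R X \<Longrightarrow> regs_agree k X Y \<Longrightarrow> regs_agree k R Y"
  unfolding regs_agree_def by simp

lemma regs_agree_mono: "regs_agree k R X \<Longrightarrow> j \<le> k \<Longrightarrow> regs_agree j R X"
  unfolding regs_agree_def by simp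

lemma regs_agree_upd [simp]:
  "k \<le> r \<Longrightarrow> regs_agree k R (X(r := v)) \<longleftrightarrow> regs_agree k R X"
  "k \<le> r \<Longrightarrow> regs_agree k (R(r := v)) = regs_agree k R"
  unfolding regs_agree_def by (auto simp: fun_eq_iff)

text \<open>A loop over register r from its current value up to n = R 0; the body runs with the
registers below r unchanged and either jumps to fail, when bad holds for the current value, or
proceeds to the increment at k.\<close>

lemma counting_loop:
  assumes head: "h < length P" "P ! h = Jump_eq r 0 exit (Suc h)" "exit < length P"
    and incr: "Suc k < length P" "P ! k = Inc r (Suc k)" "P ! Suc k = Goto h"
    and r: "0 < r" and n: "R 0 = n" "n \<le> length w"
    and body: "\<And>i ih X. i < n \<Longrightarrow> X r = i \<Longrightarrow> regs_agree r R X \<Longrightarrow> ih \<le> Suc (length w) \<Longrightarrow>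
      regs_bounded w X \<Longrightarrow> reaches_pc P w (Suc h, ih, X) (if bad i then fail else k) (regs_agree (Suc r) X)"
  shows "i \<le> n \<Longrightarrow> X r = i \<Longrightarrow> regs_agree r R X \<Longrightarrow> ih \<le> Suc (length w) \<Longrightarrow> regs_bounded w X \<Longrightarrow>
    reaches_pc P w (h, ih, X) (if \<exists>j. i \<le> j \<and> j < n \<and> bad j then fail else exit) (regs_agree r R)"
proof (induction "n - i" arbitrary: i ih X)
  case 0
  then have "X r = X 0" using r n unfolding regs_agree_def by auto
  then have leave: "cm_step P w (h, ih, X) = (exit, ih, X)" using cm_step_at[OF head(1,2)] by simp
  have no_bad: "\<not> (\<exists>j. i \<le> j \<and> j < n \<and> bad j)" using 0 by auto
  show ?case unfolding if_not_P[OF no_bad]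
    by (rule reaches_pc_step[OF leave _ reaches_pcI]) (use 0 head in auto)
next
  case (Suc m)
  have i: "i < n" using Suc.hyps(2) by simp
  have "X r \<noteq> X 0" using Suc.prems i r n unfolding regs_agree_def by auto
  then have enter: "cm_step P w (h, ih, X) = (Suc h, ih, X)" using cm_step_at[OF head(1,2)] by simp
  have "reaches_pc P w (Suc h, ih, X) (if \<exists>j. i \<le> j \<and> j < n \<and> bad j then fail else exit) (regs_agree r R)"
  proof (rule reaches_pc_then[OF body[OF i Suc.prems(2-5)]])
    fix ih' Y assume Y: "cm_bounded P w (if bad i then fail else k, ih', Y)" "regs_agree (Suc r) X Y"
    have agree: "regs_agree r R Y" using regs_agree_trans[OF Suc.prems(3) regs_agree_mono[OF Y(2), of r]] by simp
    show "reaches_pc P w (if bad i then fail else k, ih', Y)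
        (if \<exists>j. i \<le> j \<and> j < n \<and> bad j then fail else exit) (regs_agree r R)"
    proof (cases "bad i")
      case True
      then show ?thesis using Y(1) agree i by (auto intro!: reaches_pcI)
    next
      case False
      have Yr: "Y r = i" using Y(2) Suc.prems(2) unfolding regs_agree_def by simp
      have "(\<exists>j. i \<le> j \<and> j < n \<and> bad j) \<longleftrightarrow> (\<exists>j. Suc i \<le> j \<and> j < n \<and> bad j)"
        using False by (metis Suc_leD le_antisym not_less_eq_eq)
      moreover have "reaches_pc P w (h, ih', Y(r := Suc i))
          (if \<exists>j. Suc i \<le> j \<and> j < n \<and> bad j then fail else exit) (regs_agree r R)"
        using Suc.hyps(2) i agree Y(1) n(2) False
        by (intro Suc.hyps(1)) (auto intro!: regs_bounded_upd)
      ultimately have loop: "reaches_pc P w (h, ih', Y(r := Suc i))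
          (if \<exists>j. i \<le> j \<and> j < n \<and> bad j then fail else exit) (regs_agree r R)"
        by simp
      have inc: "cm_step P w (k, ih', Y) = (Suc k, ih', Y(r := Suc i))"
        using cm_step_at[OF _ incr(2)] incr(1) Yr by simp
      have goto: "cm_step P w (Suc k, ih', Y(r := Suc i)) = (h, ih', Y(r := Suc i))"
        using cm_step_at[OF incr(1,3)] by simp
      have "regs_bounded w (Y(r := Suc i))" using Y(1) i n(2) by (auto intro!: regs_bounded_upd)
      then show ?thesis unfolding if_not_P[OF False]
        by (intro reaches_pc_step[OF inc _ reaches_pc_step[OF goto _ loop]]) (use Y(1) False incr(1) in auto)
    qed
  qed
  then show ?case by (rule reaches_pc_step[OF enter, rotated]) (use Suc.prems head in auto)
qed

definition matrix_entry :: "bool list \<Rightarrow> nat \<Rightarrow> nat \<Rightarrow> nat \<Rightarrow> bool" where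
  "matrix_entry w n i j = w ! (i * n + j)"

text \<open>Registers 6 and 7 are the scratch registers of read_code; the programs below keep their data
in the registers 0 to 5.\<close>

definition leads_to :: "instr list \<Rightarrow> bool list \<Rightarrow> (nat \<Rightarrow> nat) \<Rightarrow> nat \<Rightarrow> nat \<Rightarrow> bool" where
  "leads_to P w R b q \<longleftrightarrow> (\<forall>ih X. ih \<le> Suc (length w) \<longrightarrow> regs_bounded w X \<longrightarrow> regs_agree 6 R X \<longrightarrow>
     reaches_pc P w (b, ih, X) q (regs_agree 6 R))"

lemma leads_to_refl: "q < length P \<Longrightarrow> leads_to P w R q q"
  unfolding leads_to_def by (auto intro: reaches_pcI)

lemma leads_toD:
  "leads_to P w R b q \<Longrightarrow> ih \<le> Suc (length w) \<Longrightarrow> regs_bounded w R \<Longrightarrow>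
    reaches_pc P w (b, ih, R) q (regs_agree 6 R)"
  unfolding leads_to_def regs_agree_def by simp

lemma leads_to_read:
  assumes code: "code_at P b (read_code b x y p0 p1 p2)" and xy: "x < 6" "y < 6"
    and targets: "p0 < length P" "p1 < length P" "p2 < length P"
    and n: "n * n = length w" "R 0 = n" "R x < n" "R y < n"
    and entry: "matrix_entry w n (R x) (R y) \<Longrightarrow> leads_to P w R p2 q"
    and no_entry: "\<not> matrix_entry w n (R x) (R y) \<Longrightarrow> leads_to P w R p1 q"
  shows "leads_to P w R b q"
  unfolding leads_to_def
proof (intro allI impI)
  fix ih X assume ih: "ih \<le> Suc (length w)" and X: "regs_bounded w X" "regs_agree 6 R X"
  have X_vals: "X x = R x" "X y = R y" "X 0 = n" using X(2) xy n(2) unfolding regs_agree_def by auto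
  have "R x * n + R y < n * n"
  proof -
    have "R x * n + R y < Suc (R x) * n" using n(4) by simp
    also have "\<dots> \<le> n * n" using n(3) by (intro mult_le_mono1) simp
    finally show ?thesis .
  qed
  then have pos: "min (Suc (length w)) (Suc (X x * X 0 + X y)) = Suc (R x * n + R y)"
    and sym: "inp_sym w (Suc (R x * n + R y)) = (if matrix_entry w n (R x) (R y) then 2 else 1)"
    using n(1) X_vals by (simp_all add: inp_sym_def matrix_entry_def)
  have read: "cm_reaches P w (b, ih, X)
      (if matrix_entry w n (R x) (R y) then p2 else p1, Suc (R x * n + R y), X(6 := X x, 7 := X y))"
  proof -
    have "x \<notin> {6, 7}" "y \<notin> {6, 7}" using xy by auto
    from read_entry[OF code this targets X(1) ih] show ?thesis unfolding pos sym
      by (cases "matrix_entry w n (R x) (R y)") (simp_all add: branch_def)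
  qed
  have "regs_bounded w (X(6 := X x, 7 := X y))" "regs_agree 6 R (X(6 := X x, 7 := X y))"
    using reaches_within_endpoints[OF read] X(2) by simp_all
  moreover have "Suc (R x * n + R y) \<le> Suc (length w)" using \<open>R x * n + R y < n * n\<close> n(1) by simp
  ultimately have "reaches_pc P w (if matrix_entry w n (R x) (R y) then p2 else p1, Suc (R x * n + R y),
      X(6 := X x, 7 := X y)) q (regs_agree 6 R)"
    using entry no_entry unfolding leads_to_def by auto
  then show "reaches_pc P w (b, ih, X) q (regs_agree 6 R)" by (rule reaches_pc_trans[OF read])
qed

section \<open>A counter program recognising P4-free graphs\<close>

text \<open>Layout: instructions 0 to 20 search for the side length n of the adjacency matrix and leave it
in register 0; registers 2, 3, 4, 5 range over the vertices a, b, c, d in the loops headed at 22, 24,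
75 and 77, whose increments are at 180, 178, 176 and 174; the block 25 to 73 rejects unless the
entries (a, b) and (b, a) agree and (a, a) is false, and the block 78 to 173 rejects if a-b-c-d is
an induced P4. Instruction 182 accepts and 183 rejects.\<close>

definition cograph_prog :: "instr list" where
  "cograph_prog =
     [Inc 0 1] @ read_code 1 1 1 183 17 17 @
     [Move_right 18, Branch_sym 21 19 19, Inc 0 20, Inc 1 1,
      Clear 2 22, Jump_eq 2 0 182 23, Clear 3 24, Jump_eq 3 0 180 25] @
     read_code 25 2 3 183 41 57 @ read_code 41 3 2 183 74 183 @ [Jump_eq 2 3 183 58] @
     read_code 58 3 2 183 183 74 @
     [Clear 4 75, Jump_eq 4 0 178 76, Clear 5 77, Jump_eq 5 0 176 78] @
     read_code 78 2 3 183 174 94 @ read_code 94 3 4 183 174 110 @ read_code 110 4 5 183 174 126 @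
     read_code 126 2 4 183 142 174 @ read_code 142 3 5 183 158 174 @ read_code 158 2 5 183 183 174 @
     [Inc 5 175, Goto 77, Inc 4 177, Goto 75, Inc 3 179, Goto 24, Inc 2 181, Goto 22, Accept, Reject]"

lemma length_cograph_prog: "length cograph_prog = 184"
  by (simp add: cograph_prog_def length_read_code)

lemma valid_cograph_prog: "valid_program cograph_prog"
  by (simp add: valid_program_def cograph_prog_def read_code_def rewind_code_def advance_code_def nregs_def)

lemma cograph_prog_nth:
  "cograph_prog ! 0 = Inc 0 1" "cograph_prog ! 17 = Move_right 18" "cograph_prog ! 18 = Branch_sym 21 19 19"
  "cograph_prog ! 19 = Inc 0 20" "cograph_prog ! 20 = Inc 1 1" "cograph_prog ! 21 = Clear 2 22"
  "cograph_prog ! 22 = Jump_eq 2 0 182 23" "cograph_prog ! 23 = Clear 3 24" "cograph_prog ! 24 = Jump_eq 3 0 180 25"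
  "cograph_prog ! 57 = Jump_eq 2 3 183 58" "cograph_prog ! 74 = Clear 4 75" "cograph_prog ! 75 = Jump_eq 4 0 178 76"
  "cograph_prog ! 76 = Clear 5 77" "cograph_prog ! 77 = Jump_eq 5 0 176 78" "cograph_prog ! 174 = Inc 5 175"
  "cograph_prog ! 175 = Goto 77" "cograph_prog ! 176 = Inc 4 177" "cograph_prog ! 177 = Goto 75"
  "cograph_prog ! 178 = Inc 3 179" "cograph_prog ! 179 = Goto 24" "cograph_prog ! 180 = Inc 2 181"
  "cograph_prog ! 181 = Goto 22" "cograph_prog ! 182 = Accept" "cograph_prog ! 183 = Reject"
  by (simp_all add: cograph_prog_def read_code_def rewind_code_def advance_code_def)

lemma cograph_prog_reads:
  "code_at cograph_prog 1 (read_code 1 1 1 183 17 17)"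
  "code_at cograph_prog 25 (read_code 25 2 3 183 41 57)"
  "code_at cograph_prog 41 (read_code 41 3 2 183 74 183)"
  "code_at cograph_prog 58 (read_code 58 3 2 183 183 74)"
  "code_at cograph_prog 78 (read_code 78 2 3 183 174 94)"
  "code_at cograph_prog 94 (read_code 94 3 4 183 174 110)"
  "code_at cograph_prog 110 (read_code 110 4 5 183 174 126)"
  "code_at cograph_prog 126 (read_code 126 2 4 183 142 174)"
  "code_at cograph_prog 142 (read_code 142 3 5 183 158 174)"
  "code_at cograph_prog 158 (read_code 158 2 5 183 183 174)"
  by (simp_all add: code_at_def cograph_prog_def read_code_def rewind_code_def advance_code_def)

lemma cm_step_cograph_prog:
  "pc < 184 \<Longrightarrow> cm_step cograph_prog w (pc, ih, R) = exec_instr w (cograph_prog ! pc) (pc, ih, R)"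
  using cm_step_at[of pc cograph_prog] length_cograph_prog by simp

definition induced_P4_at :: "bool list \<Rightarrow> nat \<Rightarrow> nat \<Rightarrow> nat \<Rightarrow> nat \<Rightarrow> nat \<Rightarrow> bool" where
  "induced_P4_at w n a b c d \<longleftrightarrow> matrix_entry w n a b \<and> matrix_entry w n b c \<and> matrix_entry w n c d \<and>
     \<not> matrix_entry w n a c \<and> \<not> matrix_entry w n b d \<and> \<not> matrix_entry w n a d"

definition asymmetric_or_loop_at :: "bool list \<Rightarrow> nat \<Rightarrow> nat \<Rightarrow> nat \<Rightarrow> bool" where
  "asymmetric_or_loop_at w n a b \<longleftrightarrow> matrix_entry w n a b \<noteq> matrix_entry w n b a \<or> (a = b \<and> matrix_entry w n a b)"

lemma P4_test:
  assumes n: "n * n = length w" "R 0 = n" and abcd: "R 2 = a" "R 3 = b" "R 4 = c" "R 5 = d"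
    "a < n" "b < n" "c < n" "d < n"
  shows "leads_to cograph_prog w R 78 (if induced_P4_at w n a b c d then 183 else 174)"
proof -
  note read = leads_to_read[where P = cograph_prog and R = R and n = n and w = w, OF _ _ _ _ _ _ n]
  have "leads_to cograph_prog w R 158 (if matrix_entry w n a d then 174 else 183)"
    by (rule read[OF cograph_prog_reads(10)]) (use abcd in \<open>simp_all add: leads_to_refl length_cograph_prog\<close>)
  then have "leads_to cograph_prog w R 142 (if matrix_entry w n b d \<or> matrix_entry w n a d then 174 else 183)"
    by (intro read[OF cograph_prog_reads(9)]) (use abcd in \<open>simp_all add: leads_to_refl length_cograph_prog\<close>)
  then have "leads_to cograph_prog w R 126
      (if matrix_entry w n a c \<or> matrix_entry w n b d \<or> matrix_entry w n a d then 174 else 183)"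
    by (intro read[OF cograph_prog_reads(8)]) (use abcd in \<open>simp_all add: leads_to_refl length_cograph_prog\<close>)
  then have "leads_to cograph_prog w R 110 (if matrix_entry w n c d \<and>
      \<not> (matrix_entry w n a c \<or> matrix_entry w n b d \<or> matrix_entry w n a d) then 183 else 174)"
    by (intro read[OF cograph_prog_reads(7)]) (use abcd in \<open>auto simp: leads_to_refl length_cograph_prog\<close>)
  then have "leads_to cograph_prog w R 94 (if matrix_entry w n b c \<and> matrix_entry w n c d \<and>
      \<not> (matrix_entry w n a c \<or> matrix_entry w n b d \<or> matrix_entry w n a d) then 183 else 174)"
    by (intro read[OF cograph_prog_reads(6)]) (use abcd in \<open>auto simp: leads_to_refl length_cograph_prog\<close>)
  then show ?thesis unfolding induced_P4_at_def
    by (intro read[OF cograph_prog_reads(5)]) (use abcd in \<open>auto simp: leads_to_refl length_cograph_prog\<close>)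
qed

lemma symmetry_test:
  assumes n: "n * n = length w" "R 0 = n" and ab: "R 2 = a" "R 3 = b" "a < n" "b < n"
  shows "leads_to cograph_prog w R 25 (if asymmetric_or_loop_at w n a b then 183 else 74)"
proof -
  note read = leads_to_read[where P = cograph_prog and R = R and n = n and w = w, OF _ _ _ _ _ _ n]
  have forward: "leads_to cograph_prog w R 41 (if matrix_entry w n b a then 183 else 74)"
    by (rule read[OF cograph_prog_reads(3)]) (use ab in \<open>simp_all add: leads_to_refl length_cograph_prog\<close>)
  have backward: "leads_to cograph_prog w R 58 (if matrix_entry w n b a then 74 else 183)"
    by (rule read[OF cograph_prog_reads(4)]) (use ab in \<open>simp_all add: leads_to_refl length_cograph_prog\<close>)
  have diagonal: "leads_to cograph_prog w R 57 (if a = b \<or> \<not> matrix_entry w n b a then 183 else 74)"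
    unfolding leads_to_def
  proof (intro allI impI)
    fix ih X assume X: "ih \<le> Suc (length w)" "regs_bounded w X" "regs_agree 6 R X"
    then have "X 2 = a" "X 3 = b" using ab unfolding regs_agree_def by auto
    then have step: "cm_step cograph_prog w (57, ih, X) = (if a = b then 183 else 58, ih, X)"
      by (simp add: cm_step_cograph_prog cograph_prog_nth)
    show "reaches_pc cograph_prog w (57, ih, X) (if a = b \<or> \<not> matrix_entry w n b a then 183 else 74) (regs_agree 6 R)"
    proof (rule reaches_pc_step[OF step])
      show "reaches_pc cograph_prog w (if a = b then 183 else 58, ih, X)
          (if a = b \<or> \<not> matrix_entry w n b a then 183 else 74) (regs_agree 6 R)"
        using X backward unfolding leads_to_def by (auto intro: reaches_pcI simp: length_cograph_prog)
    qed (use X in \<open>simp add: length_cograph_prog\<close>)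
  qed
  show ?thesis unfolding asymmetric_or_loop_at_def
    by (rule read[OF cograph_prog_reads(2)]) (use ab forward diagonal in \<open>auto simp: length_cograph_prog\<close>)
qed

lemma n_le_length: "n * n = length w \<Longrightarrow> n \<le> length w"
  by (metis le_square)

lemma d_loop:
  assumes n: "n * n = length w" "R 0 = n" and abc: "R 2 = a" "R 3 = b" "R 4 = c" "a < n" "b < n" "c < n"
    and start: "R 5 = 0" "ih \<le> Suc (length w)" "regs_bounded w R"
  shows "reaches_pc cograph_prog w (77, ih, R) (if \<exists>d<n. induced_P4_at w n a b c d then 183 else 176)
    (regs_agree 5 R)"
proof -
  have "reaches_pc cograph_prog w (77, ih, R)
      (if \<exists>d. 0 \<le> d \<and> d < n \<and> induced_P4_at w n a b c d then 183 else 176) (regs_agree 5 R)"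
  proof (rule counting_loop[where k = 174 and bad = "induced_P4_at w n a b c"])
    fix d ih X assume d: "d < n" "X 5 = d" "regs_agree 5 R X" and X: "ih \<le> Suc (length w)" "regs_bounded w X"
    have "leads_to cograph_prog w X 78 (if induced_P4_at w n a b c d then 183 else 174)"
      using d abc n by (intro P4_test) (auto simp: regs_agree_def)
    then show "reaches_pc cograph_prog w (Suc 77, ih, X) (if induced_P4_at w n a b c d then 183 else 174)
        (regs_agree (Suc 5) X)"
      using leads_toD X by simp
  qed (use n start in \<open>simp_all add: cograph_prog_nth length_cograph_prog regs_agree_def n_le_length\<close>)
  then show ?thesis by simp
qed

lemma c_loop:
  assumes n: "n * n = length w" "R 0 = n" and ab: "R 2 = a" "R 3 = b" "a < n" "b < n"
    and start: "R 4 = 0" "ih \<le> Suc (length w)" "regs_bounded w R"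
  shows "reaches_pc cograph_prog w (75, ih, R)
    (if \<exists>c<n. \<exists>d<n. induced_P4_at w n a b c d then 183 else 178) (regs_agree 4 R)"
proof -
  have "reaches_pc cograph_prog w (75, ih, R)
      (if \<exists>c. 0 \<le> c \<and> c < n \<and> (\<exists>d<n. induced_P4_at w n a b c d) then 183 else 178) (regs_agree 4 R)"
  proof (rule counting_loop[where k = 176 and bad = "\<lambda>c. \<exists>d<n. induced_P4_at w n a b c d"])
    fix c ih X assume c: "c < n" "X 4 = c" "regs_agree 4 R X" and X: "ih \<le> Suc (length w)" "regs_bounded w X"
    have clear: "cm_step cograph_prog w (76, ih, X) = (77, ih, X(5 := 0))"
      by (simp add: cm_step_cograph_prog cograph_prog_nth)
    have "reaches_pc cograph_prog w (77, ih, X(5 := 0))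
        (if \<exists>d<n. induced_P4_at w n a b c d then 183 else 176) (regs_agree 5 (X(5 := 0)))"
      using c X n ab by (intro d_loop) (auto simp: regs_agree_def intro: regs_bounded_upd)
    note loop = this
    show "reaches_pc cograph_prog w (Suc 75, ih, X)
        (if \<exists>d<n. induced_P4_at w n a b c d then 183 else 176) (regs_agree (Suc 4) X)"
      using reaches_pc_step[OF clear _ loop] X by (simp add: length_cograph_prog)
  qed (use n start in \<open>simp_all add: cograph_prog_nth length_cograph_prog regs_agree_def n_le_length\<close>)
  then show ?thesis by simp
qed

definition pair_violation :: "bool list \<Rightarrow> nat \<Rightarrow> nat \<Rightarrow> nat \<Rightarrow> bool" where
  "pair_violation w n a b \<longleftrightarrow> asymmetric_or_loop_at w n a b \<or> (\<exists>c<n. \<exists>d<n. induced_P4_at w n a b c d)"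

lemma pair_test:
  assumes n: "n * n = length w" "R 0 = n" and ab: "R 2 = a" "R 3 = b" "a < n" "b < n"
    and R: "ih \<le> Suc (length w)" "regs_bounded w R"
  shows "reaches_pc cograph_prog w (25, ih, R) (if pair_violation w n a b then 183 else 178) (regs_agree 4 R)"
proof (rule reaches_pc_then[OF leads_toD[OF symmetry_test[OF n ab] R]])
  fix ih' Y assume Y: "cm_bounded cograph_prog w (if asymmetric_or_loop_at w n a b then 183 else 74, ih', Y)"
    "regs_agree 6 R Y"
  have agree: "regs_agree 4 R Z" if "regs_agree 4 Y Z" for Z
    using that Y(2) unfolding regs_agree_def by simp
  show "reaches_pc cograph_prog w (if asymmetric_or_loop_at w n a b then 183 else 74, ih', Y)
      (if pair_violation w n a b then 183 else 178) (regs_agree 4 R)"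
  proof (cases "asymmetric_or_loop_at w n a b")
    case True
    then show ?thesis using Y regs_agree_mono[OF Y(2)] by (auto intro!: reaches_pcI simp: pair_violation_def)
  next
    case False
    have Y_vals: "Y 0 = n" "Y 2 = a" "Y 3 = b" using Y(2) n ab unfolding regs_agree_def by auto
    have clear: "cm_step cograph_prog w (74, ih', Y) = (75, ih', Y(4 := 0))"
      by (simp add: cm_step_cograph_prog cograph_prog_nth)
    have "reaches_pc cograph_prog w (75, ih', Y(4 := 0))
        (if \<exists>c<n. \<exists>d<n. induced_P4_at w n a b c d then 183 else 178) (regs_agree 4 (Y(4 := 0)))"
      using Y n ab Y_vals by (intro c_loop) (auto intro: regs_bounded_upd)
    moreover have "(if \<exists>c<n. \<exists>d<n. induced_P4_at w n a b c d then 183 else 178) =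
        (if pair_violation w n a b then 183 else (178::nat))"
      using False by (simp add: pair_violation_def)
    ultimately have "reaches_pc cograph_prog w (75, ih', Y(4 := 0))
        (if pair_violation w n a b then 183 else 178) (regs_agree 4 R)"
      using agree by (simp add: reaches_pc_mono)
    then have "reaches_pc cograph_prog w (74, ih', Y) (if pair_violation w n a b then 183 else 178)
        (regs_agree 4 R)"
      by (rule reaches_pc_step[OF clear, rotated]) (use False Y(1) in \<open>simp add: length_cograph_prog\<close>)
    then show ?thesis using False by simp
  qed
qed

lemma b_loop:
  assumes n: "n * n = length w" "R 0 = n" and a: "R 2 = a" "a < n"
    and start: "R 3 = 0" "ih \<le> Suc (length w)" "regs_bounded w R"
  shows "reaches_pc cograph_prog w (24, ih, R) (if \<exists>b<n. pair_violation w n a b then 183 else 180)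
    (regs_agree 3 R)"
proof -
  have "reaches_pc cograph_prog w (24, ih, R)
      (if \<exists>b. 0 \<le> b \<and> b < n \<and> pair_violation w n a b then 183 else 180) (regs_agree 3 R)"
  proof (rule counting_loop[where k = 178 and bad = "pair_violation w n a"])
    fix b ih X assume b: "b < n" "X 3 = b" "regs_agree 3 R X" and X: "ih \<le> Suc (length w)" "regs_bounded w X"
    have "X 0 = n" "X 2 = a" using b(3) n a unfolding regs_agree_def by auto
    then show "reaches_pc cograph_prog w (Suc 24, ih, X) (if pair_violation w n a b then 183 else 178)
        (regs_agree (Suc 3) X)"
      using pair_test[OF n(1) _ _ b(2) a(2) b(1) X] by simp
  qed (use n start in \<open>simp_all add: cograph_prog_nth length_cograph_prog regs_agree_def n_le_length\<close>)
  then show ?thesis by simp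
qed

lemma a_loop:
  assumes n: "n * n = length w" "R 0 = n" and start: "R 2 = 0" "ih \<le> Suc (length w)" "regs_bounded w R"
  shows "reaches_pc cograph_prog w (22, ih, R)
    (if \<exists>a<n. \<exists>b<n. pair_violation w n a b then 183 else 182) (\<lambda>_. True)"
proof -
  have "reaches_pc cograph_prog w (22, ih, R)
      (if \<exists>a. 0 \<le> a \<and> a < n \<and> (\<exists>b<n. pair_violation w n a b) then 183 else 182) (regs_agree 2 R)"
  proof (rule counting_loop[where k = 180 and bad = "\<lambda>a. \<exists>b<n. pair_violation w n a b"])
    fix a ih X assume a: "a < n" "X 2 = a" "regs_agree 2 R X" and X: "ih \<le> Suc (length w)" "regs_bounded w X"
    have clear: "cm_step cograph_prog w (23, ih, X) = (24, ih, X(3 := 0))"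
      by (simp add: cm_step_cograph_prog cograph_prog_nth)
    have "reaches_pc cograph_prog w (24, ih, X(3 := 0))
        (if \<exists>b<n. pair_violation w n a b then 183 else 180) (regs_agree 3 (X(3 := 0)))"
      using a X n by (intro b_loop) (auto simp: regs_agree_def intro: regs_bounded_upd)
    note loop = this
    show "reaches_pc cograph_prog w (Suc 22, ih, X)
        (if \<exists>b<n. pair_violation w n a b then 183 else 180) (regs_agree (Suc 2) X)"
      using reaches_pc_step[OF clear _ loop] X by (simp add: length_cograph_prog)
  qed (use n start in \<open>simp_all add: cograph_prog_nth length_cograph_prog regs_agree_def n_le_length\<close>)
  then have "reaches_pc cograph_prog w (22, ih, R)
      (if \<exists>a<n. \<exists>b<n. pair_violation w n a b then 183 else 182) (regs_agree 2 R)"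
    by simp
  then show ?thesis by (rule reaches_pc_mono) simp
qed

lemma no_square_between:
  fixes m l :: nat
  assumes "m * m < l \<or> m = 0" "l < Suc m * Suc m"
  shows "\<not> (\<exists>k\<ge>1. k * k = l)"
proof
  assume "\<exists>k\<ge>1. k * k = l"
  then obtain k where k: "1 \<le> k" "k * k = l" by blast
  show False
  proof (cases "k \<le> m")
    case True
    then have "k * k \<le> m * m" by (simp add: mult_le_mono)
    then show False using k assms(1) True by auto
  next
    case False
    then have le: "Suc m \<le> k" by simp
    have "Suc m * Suc m \<le> k * k" using mult_le_mono[OF le le] .
    then show False using k assms(2) by simp
  qed
qed

lemma read_diagonal:
  assumes "R 0 = Suc m" "R 1 = m" "regs_bounded w R" "ih \<le> Suc (length w)"
  shows "cm_reaches cograph_prog w (1, ih, R)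
    (if length w < Suc m * Suc m then 183 else 17, min (Suc (length w)) (Suc m * Suc m), R(6 := m, 7 := m))"
proof -
  have "min (Suc (length w)) (Suc (R 1 * R 0 + R 1)) = min (Suc (length w)) (Suc m * Suc m)"
    using assms(1,2) by simp
  moreover have "branch (inp_sym w (min (Suc (length w)) (Suc m * Suc m))) 183 17 17 =
      (if length w < Suc m * Suc m then 183 else 17)"
    by (simp add: branch_def inp_sym_def)
  ultimately show ?thesis
    using read_entry[OF cograph_prog_reads(1) _ _ _ _ _ assms(3,4)] assms(1,2) by (simp add: length_cograph_prog)
qed

text \<open>The search reads the input at the positions (m + 1) * (m + 1) for m = 0, 1, ... and stops when
it reaches the end of the input; the side length has been found if the input ends right after.\<close>

lemma find_side_length:
  "R 0 = Suc m \<Longrightarrow> R 1 = m \<Longrightarrow> m * m < length w \<or> m = 0 \<Longrightarrow> regs_bounded w R \<Longrightarrow>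
    ih \<le> Suc (length w) \<Longrightarrow>
    reaches_pc cograph_prog w (1, ih, R) (if \<exists>k\<ge>1. k * k = length w then 21 else 183)
      (\<lambda>X. (\<exists>k\<ge>1. k * k = length w) \<longrightarrow> X 0 * X 0 = length w)"
proof (induction "length w - m" arbitrary: m R ih rule: less_induct)
  case less
  let ?L = "length w"
  let ?square = "\<exists>k\<ge>1. k * k = ?L"
  let ?Q = "\<lambda>X. ?square \<longrightarrow> X 0 * X 0 = ?L"
  define sq where "sq = Suc m * Suc m"
  define R1 where "R1 = R(6 := m, 7 := m)"
  have read: "cm_reaches cograph_prog w (1, ih, R) (if ?L < sq then 183 else 17, min (Suc ?L) sq, R1)"
    using read_diagonal[OF less.prems(1,2,4,5)] unfolding sq_def R1_def .
  have R1: "regs_bounded w R1" "R1 0 = Suc m" "R1 1 = m"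
    using reaches_within_endpoints[OF read] less.prems(1,2) by (auto simp: R1_def)
  show ?case
  proof (cases "?L < sq")
    case True
    then have no_square: "\<not> ?square" using no_square_between less.prems(3) unfolding sq_def by blast
    have read': "cm_reaches cograph_prog w (1, ih, R) (183, Suc ?L, R1)" using read True by simp
    show ?thesis unfolding if_not_P[OF no_square]
      by (rule reaches_pc_trans[OF read' reaches_pcI]) (use no_square R1 in \<open>auto simp: length_cograph_prog\<close>)
  next
    case False
    have sq: "1 \<le> sq" "sq \<le> ?L" using False unfolding sq_def by simp_all
    then have read': "cm_reaches cograph_prog w (1, ih, R) (17, sq, R1)" using read False by simp
    have right: "cm_step cograph_prog w (17, sq, R1) = (18, Suc sq, R1)"
      using sq by (simp add: cm_step_cograph_prog cograph_prog_nth)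
    have "reaches_pc cograph_prog w (18, Suc sq, R1) (if ?square then 21 else 183) ?Q"
    proof (cases "sq = ?L")
      case True
      then have leave: "cm_step cograph_prog w (18, Suc sq, R1) = (21, Suc sq, R1)"
        by (simp add: cm_step_cograph_prog cograph_prog_nth branch_def inp_sym_def)
      have found: "?square" "R1 0 * R1 0 = ?L"
        using True R1(2) unfolding sq_def by (auto intro: exI[of _ "Suc m"])
      show ?thesis unfolding if_P[OF found(1)]
        by (rule reaches_pc_step[OF leave _ reaches_pcI]) (use True R1 found in \<open>simp_all add: length_cograph_prog\<close>)
    next
      case False
      then have lt: "sq < ?L" using sq by simp
      define R2 where "R2 = R1(0 := Suc (Suc m), 1 := Suc m)"
      have steps: "cm_step cograph_prog w (18, Suc sq, R1) = (19, Suc sq, R1)"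
        "cm_step cograph_prog w (19, Suc sq, R1) = (20, Suc sq, R1(0 := Suc (Suc m)))"
        "cm_step cograph_prog w (20, Suc sq, R1(0 := Suc (Suc m))) = (1, Suc sq, R2)"
        using lt R1 by (simp_all add: cm_step_cograph_prog cograph_prog_nth branch_def inp_sym_def R2_def)
      have "Suc m \<le> sq" unfolding sq_def by (rule le_square)
      then have "Suc (Suc m) \<le> Suc ?L" using lt by simp
      then have bounded: "regs_bounded w (R1(0 := Suc (Suc m)))" "regs_bounded w R2"
        using R1 unfolding R2_def by (auto intro!: regs_bounded_upd)
      have "reaches_pc cograph_prog w (1, Suc sq, R2) (if ?square then 21 else 183) ?Q"
        using lt bounded unfolding sq_def by (intro less.hyps) (auto simp: R2_def)
      then show ?thesis using lt R1 bounded
        by (intro reaches_pc_step[OF steps(1) _ reaches_pc_step[OF steps(2) _ reaches_pc_step[OF steps(3)]]])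
           (simp_all add: length_cograph_prog)
    qed
    then show ?thesis using sq R1
      by (intro reaches_pc_trans[OF read'] reaches_pc_step[OF right]) (simp_all add: length_cograph_prog)
  qed
qed

definition P4_free_matrix :: "bool list \<Rightarrow> bool" where
  "P4_free_matrix w \<longleftrightarrow> (\<exists>n\<ge>1. n * n = length w \<and> \<not> (\<exists>a<n. \<exists>b<n. pair_violation w n a b))"

lemma square_root_unique:
  fixes k n :: nat
  assumes "k * k = n * n"
  shows "k = n"
proof (rule ccontr)
  assume "k \<noteq> n"
  then consider "k < n" | "n < k" by linarith
  then have "k * k < n * n \<or> n * n < k * k" by cases (simp_all add: mult_strict_mono)
  then show False using assms by simp
qed

lemma P4_free_matrix_side:
  assumes "n * n = length w" "\<exists>k\<ge>1. k * k = length w"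
  shows "P4_free_matrix w \<longleftrightarrow> \<not> (\<exists>a<n. \<exists>b<n. pair_violation w n a b)"
proof -
  have "k = n" if "k * k = length w" for k using that assms(1) square_root_unique[of k n] by simp
  then show ?thesis unfolding P4_free_matrix_def using assms(2) by auto
qed

lemma check_matrix:
  assumes "n * n = length w" "R 0 = n" "ih \<le> Suc (length w)" "regs_bounded w R"
  shows "reaches_pc cograph_prog w (21, ih, R) (if \<exists>a<n. \<exists>b<n. pair_violation w n a b then 183 else 182)
    (\<lambda>_. True)"
proof -
  have clear: "cm_step cograph_prog w (21, ih, R) = (22, ih, R(2 := 0))"
    by (simp add: cm_step_cograph_prog cograph_prog_nth)
  have "reaches_pc cograph_prog w (22, ih, R(2 := 0))
      (if \<exists>a<n. \<exists>b<n. pair_violation w n a b then 183 else 182) (\<lambda>_. True)"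
    using assms by (intro a_loop) (auto intro: regs_bounded_upd)
  then show ?thesis by (rule reaches_pc_step[OF clear, rotated]) (use assms in \<open>simp add: length_cograph_prog\<close>)
qed

lemma cograph_prog_run:
  "reaches_pc cograph_prog w (0, 0, \<lambda>_. 0) (if P4_free_matrix w then 182 else 183) (\<lambda>_. True)"
proof -
  let ?square = "\<exists>k\<ge>1. k * k = length w"
  have start: "cm_step cograph_prog w (0, 0, \<lambda>_. 0) = (1, 0, (\<lambda>_. 0)(0 := 1))"
    by (simp add: cm_step_cograph_prog cograph_prog_nth)
  have bounded: "regs_bounded w (\<lambda>_. 0)" "regs_bounded w ((\<lambda>_. 0)(0 := 1))"
    by (simp_all add: regs_bounded_def)
  have search: "reaches_pc cograph_prog w (1, 0, (\<lambda>_. 0)(0 := 1)) (if ?square then 21 else 183)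
      (\<lambda>X. ?square \<longrightarrow> X 0 * X 0 = length w)"
    using find_side_length[of "(\<lambda>_. 0)(0 := 1)" 0 w 0] bounded by simp
  have "reaches_pc cograph_prog w (1, 0, (\<lambda>_. 0)(0 := 1)) (if P4_free_matrix w then 182 else 183) (\<lambda>_. True)"
  proof (rule reaches_pc_then[OF search])
    fix ih X assume X: "cm_bounded cograph_prog w (if ?square then 21 else 183, ih, X)"
      "?square \<longrightarrow> X 0 * X 0 = length w"
    show "reaches_pc cograph_prog w (if ?square then 21 else 183, ih, X)
        (if P4_free_matrix w then 182 else 183) (\<lambda>_. True)"
    proof (cases ?square)
      case False
      then show ?thesis using X(1) unfolding P4_free_matrix_def by (auto intro: reaches_pcI simp: length_cograph_prog)
    next
      case True
      then have side: "X 0 * X 0 = length w" using X(2) by simp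
      have "(if \<exists>a<X 0. \<exists>b<X 0. pair_violation w (X 0) a b then 183 else 182) =
          (if P4_free_matrix w then 182 else (183::nat))"
        using P4_free_matrix_side[OF side True] by simp
      then show ?thesis using check_matrix[where R = X, OF side refl] X(1) True by simp
    qed
  qed
  then show ?thesis using bounded by (intro reaches_pc_step[OF start]) (simp_all add: length_cograph_prog)
qed

lemma P4_free_matrix_iff: "P4_free_matrix w \<longleftrightarrow> w \<in> cograph_lang"
proof
  assume "P4_free_matrix w"
  then obtain n where n: "1 \<le> n" "n * n = length w" and ok: "\<not> (\<exists>a<n. \<exists>b<n. pair_violation w n a b)"
    unfolding P4_free_matrix_def by blast
  let ?E = "\<lambda>i j. w ! (i * n + j)"
  have sym: "\<forall>i<n. \<forall>j<n. ?E i j = ?E j i" and irrefl: "\<forall>i<n. \<not> ?E i i"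
    using ok unfolding pair_violation_def asymmetric_or_loop_at_def matrix_entry_def by blast+
  have "\<not> has_induced_P4 {0..<n} ?E"
    using ok unfolding pair_violation_def induced_P4_at_def matrix_entry_def has_induced_P4_def by auto
  moreover have "simple_graph_on {0..<n} ?E" using sym irrefl unfolding simple_graph_on_def by auto
  ultimately have "is_cograph {0..<n} ?E" using cograph_iff_P4_free n(1) by auto
  moreover have "encodes_graph w n" unfolding encodes_graph_def using n sym irrefl by auto
  ultimately show "w \<in> cograph_lang" unfolding cograph_lang_def by blast
next
  assume "w \<in> cograph_lang"
  then obtain n where "encodes_graph w n" and cograph: "is_cograph {0..<n} (\<lambda>i j. w ! (i * n + j))"
    unfolding cograph_lang_def by blast
  then have n: "1 \<le> n" "n * n = length w"
    and sym: "\<forall>i<n. \<forall>j<n. w ! (i * n + j) = w ! (j * n + i)" and irrefl: "\<forall>i<n. \<not> w ! (i * n + i)"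
    unfolding encodes_graph_def by auto
  have P4_free: "\<not> has_induced_P4 {0..<n} (\<lambda>i j. w ! (i * n + j))" using cograph_P4_free[OF cograph] .
  have "\<not> pair_violation w n a b" if "a < n" "b < n" for a b
  proof
    assume "pair_violation w n a b"
    moreover have "\<not> asymmetric_or_loop_at w n a b"
      using sym irrefl that unfolding asymmetric_or_loop_at_def matrix_entry_def by auto
    ultimately obtain c d where "c < n" "d < n" "induced_P4_at w n a b c d" unfolding pair_violation_def by blast
    then have "has_induced_P4 {0..<n} (\<lambda>i j. w ! (i * n + j))"
      using that unfolding has_induced_P4_def induced_P4_at_def matrix_entry_def
      by (intro bexI[of _ a] bexI[of _ b] bexI[of _ c] bexI[of _ d]) auto
    then show False using P4_free by blast
  qed
  then show "P4_free_matrix w" unfolding P4_free_matrix_def using n by blast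
qed

lemma cograph_prog_decides: "cm_decides cograph_prog cograph_lang"
  unfolding cm_decides_def
proof
  fix w
  obtain ih R where "cm_reaches cograph_prog w (0, 0, \<lambda>_. 0) (if P4_free_matrix w then 182 else 183, ih, R)"
    using cograph_prog_run[of w] unfolding reaches_pc_def by blast
  then show "\<exists>q ih R. cm_reaches cograph_prog w (0, 0, \<lambda>_. 0) (q, ih, R) \<and>
      cograph_prog ! q = (if w \<in> cograph_lang then Accept else Reject)"
    using P4_free_matrix_iff cograph_prog_nth by (metis (full_types))
qed

theorem corollary3p19:
  shows "\<exists>M. wf_tm M \<and> logspace_tm M \<and> decides M cograph_lang"
  using compile_decides_in_logspace[OF valid_cograph_prog cograph_prog_decides] by blast

end
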